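(* Let $1\le i\le r$, $(\ell^+,\mathbf s^+)\in\mathbf F_+$ and $(\ell,\mathbf s)\in\mathbf F$. Then $\mathrm{pr}\big(\mathbf x^+_{i,r}(\ell^+,\mathbf s^+)\,\mathbf x^-_{i,r}(\ell,\mathbf s)\big)$ is a linear combination of elements $\mathbf x^-_{i,r}(\ell-\ell^+,\mathbf s')$ with $(\ell-\ell^+,\mathbf s')\in\mathbf F$ and $|\mathbf s'|=|\mathbf s|+|\mathbf s^+|$ (in particular it is $0$ if $\ell^+>\ell$).
   Context: $\mathfrak g=\mathfrak{sl}_{r+1}(\mathbb C)$, $\mathfrak h$ diagonal, $x^+_{i,j}=E_{i,j+1}$, $x^-_{i,j}=E_{j+1,i}$, $\mathfrak n^\pm=\bigoplus\mathbb Cx^\pm_{i,j}$, $\mathfrak b^+=\mathfrak h\oplus\mathfrak n^+$, $\mathfrak a[t]=\mathfrak a\otimes\mathbb C[t]$. $\mathrm{pr}:U(\mathfrak g[t])\to U(\mathfrak n^-[t])$ is the projection along $U(\mathfrak g[t])\mathfrak b^+[t]$ in $U(\mathfrak g[t])=U(\mathfrak n^-[t])\oplus U(\mathfrak g[t])\mathfrak b^+[t]$. $\mathbf F$: pairs $(\ell,\mathbf s)$, $\ell\in\mathbb N$, $\mathbf s=(\mathbf s(1)\le\dots\le\mathbf s(\ell))\in\mathbb N^\ell$, $|\mathbf s|=\sum_p\mathbf s(p)$; $\mathbf F_+\subset\mathbf F$: $(0,\emptyset)$ and pairs with all $\mathbf s(p)>0$. $\mathbf x^\pm_{i,j}(\ell,\mathbf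 s)=\prod_{p=1}^\ell(x^\pm_{i,j}\otimes t^{\mathbf s(p)})$ (equal to $1$ if $\ell=0$). *)

theory Defs
  imports Complex_Main
begin

text \<open>Elements of sl_n[t] (n = r+1) are represented as functions
  x k a b = coefficient of E_{a,b} tensor t^k, indices a,b in {1..n}.\<close>
type_synonym cur = "nat \<Rightarrow> nat \<Rightarrow> nat \<Rightarrow> complex"

definition valid :: "nat \<Rightarrow> cur \<Rightarrow> bool" where
  "valid n x \<longleftrightarrow> finite {k. x k \<noteq> (\<lambda>a b. 0)}
     \<and> (\<forall>k a b. (a \<notin> {1..n} \<or> b \<notin> {1..n}) \<longrightarrow> x k a b = 0)
     \<and> (\<forall>k. (\<Sum>a\<in>{1..n}. x k a a) = 0)"

text \<open>Lie bracket of g[t]: [X t^p, Y t^q] = [X,Y] t^(p+q).\<close>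
definition bracket :: "nat \<Rightarrow> cur \<Rightarrow> cur \<Rightarrow> cur" where
  "bracket n x y = (\<lambda>k a b. \<Sum>p\<in>{..k}. \<Sum>c\<in>{1..n}.
      x p a c * y (k - p) c b - y (k - p) a c * x p c b)"

text \<open>Free associative algebra on the set cur: noncommutative polynomials
  as coefficient functions on words.\<close>
type_synonym fa = "cur list \<Rightarrow> complex"

definition fin_supp :: "fa \<Rightarrow> bool" where
  "fin_supp f \<longleftrightarrow> finite {w. f w \<noteq> 0}"

definition fa_word :: "cur list \<Rightarrow> fa" where
  "fa_word w = (\<lambda>u. if u = w then 1 else 0)"

definition fa_gen :: "cur \<Rightarrow> fa" where
  "fa_gen x = fa_word [x]"

definition fa_mul :: "fa \<Rightarrow> fa \<Rightarrow> fa" where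
  "fa_mul f g = (\<lambda>w. \<Sum>p\<in>{..length w}. f (take p w) * g (drop p w))"

definition fa_add :: "fa \<Rightarrow> fa \<Rightarrow> fa" where
  "fa_add f g = (\<lambda>w. f w + g w)"

definition fa_diff :: "fa \<Rightarrow> fa \<Rightarrow> fa" where
  "fa_diff f g = (\<lambda>w. f w - g w)"

definition fa_smult :: "complex \<Rightarrow> fa \<Rightarrow> fa" where
  "fa_smult c f = (\<lambda>w. c * f w)"

definition cspan :: "fa set \<Rightarrow> fa set" where
  "cspan S = {f. \<exists>F c. finite F \<and> F \<subseteq> S \<and> f = (\<lambda>w. \<Sum>g\<in>F. c g * g w)}"

text \<open>Defining relations of U(sl_n[t]) as a quotient of the free algebra:
  non-elements of g[t] are killed, iota is linear, and iota x iota y - iota y iota x = iota [x,y].\<close>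
definition rels :: "nat \<Rightarrow> fa set" where
  "rels n =
     {fa_gen x | x. \<not> valid n x}
   \<union> {fa_diff (fa_gen (\<lambda>k a b. x k a b + y k a b)) (fa_add (fa_gen x) (fa_gen y)) | x y.
        valid n x \<and> valid n y}
   \<union> {fa_diff (fa_gen (\<lambda>k a b. c * x k a b)) (fa_smult c (fa_gen x)) | c x. valid n x}
   \<union> {fa_diff (fa_diff (fa_mul (fa_gen x) (fa_gen y)) (fa_mul (fa_gen y) (fa_gen x)))
          (fa_gen (bracket n x y)) | x y. valid n x \<and> valid n y}"

text \<open>Two-sided ideal generated by the relations; U(g[t]) = free algebra / ideal n.\<close>
definition ideal :: "nat \<Rightarrow> fa set" where
  "ideal n = cspan {fa_mul (fa_mul a \<rho>) b | a \<rho> b. fin_supp a \<and> fin_supp b \<and> \<rho> \<in> rels n}"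

definition in_nminus :: "cur \<Rightarrow> bool" where
  "in_nminus x \<longleftrightarrow> (\<forall>k a b. x k a b \<noteq> 0 \<longrightarrow> b < a)"

definition in_bplus :: "cur \<Rightarrow> bool" where
  "in_bplus x \<longleftrightarrow> (\<forall>k a b. x k a b \<noteq> 0 \<longrightarrow> a \<le> b)"

text \<open>Representatives of U(n^-[t]): span of words in elements of n^-[t].\<close>
definition Nminus :: "nat \<Rightarrow> fa set" where
  "Nminus n = cspan {fa_word w | w. \<forall>x\<in>set w. valid n x \<and> in_nminus x}"

text \<open>Representatives of the left ideal U(g[t]) b^+[t] (plus the defining ideal).\<close>
definition Jleft :: "nat \<Rightarrow> fa set" where
  "Jleft n = {fa_add f g | f g.
      f \<in> cspan {fa_mul a (fa_gen y) | a y. fin_supp a \<and> valid n y \<and> in_bplus y}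
      \<and> g \<in> ideal n}"

text \<open>v represents pr(u): v lies in U(n^-[t]) and u - v lies in U(g[t]) b^+[t].\<close>
definition pr_rel :: "nat \<Rightarrow> fa \<Rightarrow> fa \<Rightarrow> bool" where
  "pr_rel n u v \<longleftrightarrow> v \<in> Nminus n \<and> fa_diff u v \<in> Jleft n"

text \<open>x^+_{i,j} tensor t^k = E_{i,j+1} t^k and x^-_{i,j} tensor t^k = E_{j+1,i} t^k.\<close>
definition xplus :: "nat \<Rightarrow> nat \<Rightarrow> nat \<Rightarrow> cur" where
  "xplus i j k = (\<lambda>k' a b. if k' = k \<and> a = i \<and> b = Suc j then 1 else 0)"

definition xminus :: "nat \<Rightarrow> nat \<Rightarrow> nat \<Rightarrow> cur" where
  "xminus i j k = (\<lambda>k' a b. if k' = k \<and> a = Suc j \<and> b = i then 1 else 0)"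

text \<open>bold x^{+-}_{i,j}(l, s) for s given as a sorted list of length l.\<close>
definition xvec_plus :: "nat \<Rightarrow> nat \<Rightarrow> nat list \<Rightarrow> fa" where
  "xvec_plus i j s = fa_word (map (xplus i j) s)"

definition xvec_minus :: "nat \<Rightarrow> nat \<Rightarrow> nat list \<Rightarrow> fa" where
  "xvec_minus i j s = fa_word (map (xminus i j) s)"

end

(*
  The universal enveloping algebra of sl_{r+1}[t] is realised, modulo its defining ideal, as
  operators on U(n^-[t]) = U(g[t]) / U(g[t]) b^+[t], built by hand: n^-[t] acts by left
  multiplication, and b^+[t] acts by commuting past the letters of a word, leaving the
  n^- part of each commutator behind, and annihilating the empty word.  Every element of the
  left ideal U(g[t]) b^+[t] kills the empty word, while every element of U(n^-[t]) reproduces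
  itself from it; hence U(n^-[t]) meets U(g[t]) b^+[t] only in the defining ideal, and pr is
  well defined modulo that ideal.

  The same commutation computes pr of x^+_{i,r}(l^+, s^+) x^-_{i,r}(l, s): moving
  x^+_{i,r} t^k past x^-_{i,r} t^j yields h t^(k+j) with h diagonal, and moving h t^p past
  x^-_{i,r} t^j yields -2 x^-_{i,r} t^(p+j).  So each letter x^+ deletes one letter x^- and adds
  its degree to the degree of the survivors, and since the letters x^-_{i,r} t^j commute with
  each other, the resulting monomials may be sorted.
*)

theory Submission
  imports Defs "HOL-Library.Function_Algebras" "HOL-Computational_Algebra.Formal_Power_Series"
begin

section \<open>The free algebra as a complex vector space\<close>

interpretation fa: module "fa_smult :: complex \<Rightarrow> fa \<Rightarrow> fa"
  by standard (simp_all add: fa_smult_def fun_eq_iff algebra_simps)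

lemma fa_smult_apply: "fa_smult c f w = c * f w"
  by (simp add: fa_smult_def)

lemma fa_add_eq_plus: "fa_add f g = f + g"
  by (simp add: fa_add_def fun_eq_iff)

lemma fa_diff_eq_minus: "fa_diff f g = f - g"
  by (simp add: fa_diff_def fun_eq_iff)

lemma fa_sum_apply: "(\<Sum>g\<in>F. h g) w = (\<Sum>g\<in>F. h g w)" for h :: "'a \<Rightarrow> fa"
  by (induction F rule: infinite_finite_induct) simp_all

lemma cspan_eq_span: "cspan S = fa.span S"
  unfolding cspan_def fa.span_explicit by (auto simp: fun_eq_iff fa_sum_apply fa_smult_apply)

lemma fa_word_apply: "fa_word w u = (if u = w then 1 else 0)"
  by (simp add: fa_word_def)

lemma subspace_fin_supp: "fa.subspace {f. fin_supp f}"
proof (unfold fa.subspace_def fin_supp_def, intro conjI ballI allI)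
  fix f g :: fa assume "f \<in> {f. finite {w. f w \<noteq> 0}}" "g \<in> {f. finite {w. f w \<noteq> 0}}"
  then show "f + g \<in> {f. finite {w. f w \<noteq> 0}}"
    by (auto intro: finite_subset[of _ "{w. f w \<noteq> 0} \<union> {w. g w \<noteq> 0}"])
qed (auto simp: fa_smult_apply intro: finite_subset)

lemma fin_supp_zero [simp]: "fin_supp 0"
  and fin_supp_add [simp]: "fin_supp f \<Longrightarrow> fin_supp g \<Longrightarrow> fin_supp (f + g)"
  and fin_supp_diff [simp]: "fin_supp f \<Longrightarrow> fin_supp g \<Longrightarrow> fin_supp (f - g)"
  and fin_supp_smult [simp]: "fin_supp f \<Longrightarrow> fin_supp (fa_smult c f)"
  and fin_supp_sum: "(\<And>x. x \<in> X \<Longrightarrow> fin_supp (h x)) \<Longrightarrow> fin_supp (\<Sum>x\<in>X. h x)"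
  using fa.subspace_0[OF subspace_fin_supp] fa.subspace_add[OF subspace_fin_supp]
    fa.subspace_diff[OF subspace_fin_supp] fa.subspace_scale[OF subspace_fin_supp]
    fa.subspace_sum[OF subspace_fin_supp, of X h]
  by auto

lemma fin_supp_word [simp]: "fin_supp (fa_word w)"
  by (simp add: fin_supp_def fa_word_def)

lemma fin_supp_span: "f \<in> fa.span S \<Longrightarrow> (\<And>g. g \<in> S \<Longrightarrow> fin_supp g) \<Longrightarrow> fin_supp f"
  using fa.span_minimal[OF _ subspace_fin_supp, of S] by auto

lemma fin_supp_eq_sum_words:
  assumes "finite S" "{w. f w \<noteq> 0} \<subseteq> S"
  shows "f = (\<Sum>w\<in>S. fa_smult (f w) (fa_word w))"
proof
  fix u
  have "(\<Sum>w\<in>S. f w * fa_word w u) = (\<Sum>w\<in>S. if w = u then f u else 0)"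
    by (rule sum.cong) (auto simp: fa_word_apply)
  also have "\<dots> = f u"
    using assms by auto
  finally show "f u = (\<Sum>w\<in>S. fa_smult (f w) (fa_word w)) u"
    by (simp add: fa_sum_apply fa_smult_apply)
qed

lemma fin_supp_iff_in_span_words: "fin_supp f \<longleftrightarrow> f \<in> fa.span (range fa_word)"
proof
  assume "fin_supp f"
  then have "f = (\<Sum>w\<in>{w. f w \<noteq> 0}. fa_smult (f w) (fa_word w))"
    by (intro fin_supp_eq_sum_words) (simp_all add: fin_supp_def)
  also have "\<dots> \<in> fa.span (range fa_word)"
    by (intro fa.span_sum fa.span_scale fa.span_base) simp
  finally show "f \<in> fa.span (range fa_word)" .
next
  assume "f \<in> fa.span (range fa_word)"
  then show "fin_supp f"
    by (rule fin_supp_span) auto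
qed

text \<open>The free algebra proper consists of the finitely supported elements of \<^typ>\<open>fa\<close>; maps
  defined by linear extension from words are linear only there.\<close>

definition fs_linear :: "(fa \<Rightarrow> fa) \<Rightarrow> bool" where
  "fs_linear T \<longleftrightarrow> (\<forall>f g. fin_supp f \<longrightarrow> fin_supp g \<longrightarrow> T (f + g) = T f + T g)
     \<and> (\<forall>c f. fin_supp f \<longrightarrow> T (fa_smult c f) = fa_smult c (T f))
     \<and> (\<forall>f. fin_supp f \<longrightarrow> fin_supp (T f))"

lemma fs_linearD:
  assumes "fs_linear T"
  shows fs_linear_add: "fin_supp f \<Longrightarrow> fin_supp g \<Longrightarrow> T (f + g) = T f + T g"
    and fs_linear_smult: "fin_supp f \<Longrightarrow> T (fa_smult c f) = fa_smult c (T f)"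
    and fs_linear_fin_supp: "fin_supp f \<Longrightarrow> fin_supp (T f)"
  using assms by (auto simp: fs_linear_def)

lemma fs_linear_diff:
  assumes "fs_linear T" "fin_supp f" "fin_supp g"
  shows "T (f - g) = T f - T g"
proof -
  have "T f = T (f - g) + T g"
    using fs_linear_add[OF assms(1) fin_supp_diff[OF assms(2,3)] assms(3)] by simp
  then show ?thesis
    by (simp add: eq_diff_eq)
qed

lemma fs_linear_zero: "fs_linear T \<Longrightarrow> T 0 = 0"
  using fs_linear_diff[of T 0 0] by simp

lemma fs_linear_plus: "fs_linear S \<Longrightarrow> fs_linear T \<Longrightarrow> fs_linear (\<lambda>f. S f + T f)"
  unfolding fs_linear_def by (simp add: algebra_simps)

lemma fs_linear_minus: "fs_linear S \<Longrightarrow> fs_linear T \<Longrightarrow> fs_linear (\<lambda>f. S f - T f)"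
  unfolding fs_linear_def by (simp add: algebra_simps)

lemma fs_linear_scaled: "fs_linear T \<Longrightarrow> fs_linear (\<lambda>f. fa_smult c (T f))"
  unfolding fs_linear_def by (simp add: fa.scale_right_distrib mult.commute)

lemma fs_linear_comp: "fs_linear S \<Longrightarrow> fs_linear T \<Longrightarrow> fs_linear (\<lambda>f. S (T f))"
  unfolding fs_linear_def by simp

lemma fs_linear_ident: "fs_linear (\<lambda>f. f)"
  unfolding fs_linear_def by simp

lemma fs_linear_in_subspace:
  assumes "f \<in> fa.span S" "fs_linear T" "fa.subspace A"
    and "\<And>g. g \<in> S \<Longrightarrow> fin_supp g" "\<And>g. g \<in> S \<Longrightarrow> T g \<in> A"
  shows "T f \<in> A"
proof -
  have "fa.subspace {f. fin_supp f \<and> T f \<in> A}"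
    using fs_linearD[OF assms(2)] fs_linear_zero[OF assms(2)]
      fa.subspace_0[OF assms(3)] fa.subspace_add[OF assms(3)] fa.subspace_scale[OF assms(3)]
    by (auto simp: fa.subspace_def)
  then show ?thesis
    using fa.span_induct[OF assms(1), of "\<lambda>f. fin_supp f \<and> T f \<in> A"] assms(4,5) by auto
qed

lemma fs_linear_eqI:
  assumes "fs_linear S" "fs_linear T" "\<And>w. S (fa_word w) = T (fa_word w)" "fin_supp f"
  shows "S f = T f"
proof -
  have "f \<in> fa.span (range fa_word)"
    using assms(4) by (simp add: fin_supp_iff_in_span_words)
  then have "S f - T f \<in> {0}"
    by (rule fs_linear_in_subspace[OF _ fs_linear_minus[OF assms(1,2)] fa.subspace_single_0])
      (auto simp: assms(3))
  then show ?thesis by simp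
qed

definition word_ext :: "(cur list \<Rightarrow> fa) \<Rightarrow> fa \<Rightarrow> fa" where
  "word_ext F f = (\<Sum>w\<in>{w. f w \<noteq> 0}. fa_smult (f w) (F w))"

lemma word_ext_superset:
  assumes "finite S" "{w. f w \<noteq> 0} \<subseteq> S"
  shows "word_ext F f = (\<Sum>w\<in>S. fa_smult (f w) (F w))"
  unfolding word_ext_def using assms
  by (intro sum.mono_neutral_left) (auto simp: fun_eq_iff)

lemma word_ext_word [simp]: "word_ext F (fa_word w) = F w"
proof -
  have "{u. fa_word w u \<noteq> 0} = {w}"
    by (auto simp: fa_word_apply)
  then show ?thesis
    by (simp add: word_ext_def fa_word_apply)
qed

lemma fs_linear_word_ext:
  assumes "\<And>w. fin_supp (F w)"
  shows "fs_linear (word_ext F)"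
  unfolding fs_linear_def
proof (intro conjI allI impI)
  fix f g assume "fin_supp f" "fin_supp g"
  then have fin: "finite ({w. f w \<noteq> 0} \<union> {w. g w \<noteq> 0})"
    by (simp add: fin_supp_def)
  have "{w. (f + g) w \<noteq> 0} \<subseteq> {w. f w \<noteq> 0} \<union> {w. g w \<noteq> 0}"
    by auto
  then show "word_ext F (f + g) = word_ext F f + word_ext F g"
    using word_ext_superset[OF fin] by (simp add: algebra_simps sum.distrib fa.scale_left_distrib)
next
  fix c f assume "fin_supp f"
  then have "word_ext F (fa_smult c f) = (\<Sum>w\<in>{w. f w \<noteq> 0}. fa_smult (c * f w) (F w))"
    using word_ext_superset[of "{w. f w \<noteq> 0}" "fa_smult c f" F] by (auto simp: fin_supp_def fa_smult_apply)
  then show "word_ext F (fa_smult c f) = fa_smult c (word_ext F f)"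
    by (simp add: word_ext_def fa.scale_sum_right)
next
  fix f show "fin_supp (word_ext F f)"
    unfolding word_ext_def by (intro fin_supp_sum fin_supp_smult assms)
qed

lemma fa_mul_word_word [simp]: "fa_mul (fa_word u) (fa_word w) = fa_word (u @ w)"
proof
  fix v
  have "fa_mul (fa_word u) (fa_word w) v
      = (\<Sum>p\<in>{..length v}. if p = length u \<and> v = u @ w then 1 else 0)"
    unfolding fa_mul_def
  proof (rule sum.cong)
    fix p assume "p \<in> {..length v}"
    then have "(take p v = u \<and> drop p v = w) \<longleftrightarrow> (p = length u \<and> v = u @ w)"
      by (auto simp: min_def dest: arg_cong[of _ _ length])
    then show "fa_word u (take p v) * fa_word w (drop p v)
        = (if p = length u \<and> v = u @ w then 1 else 0)"
      by (auto simp: fa_word_apply)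
  qed simp
  also have "\<dots> = fa_word (u @ w) v"
    by (auto simp: fa_word_apply)
  finally show "fa_mul (fa_word u) (fa_word w) v = fa_word (u @ w) v" .
qed

lemma fa_mul_add_left: "fa_mul (f + g) h = fa_mul f h + fa_mul g h"
  and fa_mul_add_right: "fa_mul h (f + g) = fa_mul h f + fa_mul h g"
  and fa_mul_diff_left: "fa_mul (f - g) h = fa_mul f h - fa_mul g h"
  and fa_mul_diff_right: "fa_mul h (f - g) = fa_mul h f - fa_mul h g"
  and fa_mul_smult_left: "fa_mul (fa_smult c f) h = fa_smult c (fa_mul f h)"
  and fa_mul_smult_right: "fa_mul h (fa_smult c f) = fa_smult c (fa_mul h f)"
  and fa_mul_zero_left: "fa_mul 0 h = 0"
  and fa_mul_zero_right: "fa_mul h 0 = 0"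
  unfolding fa_mul_def
  by (simp_all add: fun_eq_iff fa_smult_apply algebra_simps sum.distrib sum_subtractf sum_distrib_left)

lemma fin_supp_mul [simp]:
  assumes "fin_supp f" "fin_supp g"
  shows "fin_supp (fa_mul f g)"
proof -
  have "g \<in> fa.span (range fa_word)"
    using assms(2) by (simp add: fin_supp_iff_in_span_words)
  then have words: "fin_supp (fa_mul (fa_word u) g)" for u
  proof (induction rule: fa.span_induct)
    case base
    show ?case
      by (auto simp: fa.subspace_def fa_mul_add_right fa_mul_smult_right fa_mul_zero_right)
  qed auto
  have "f \<in> fa.span (range fa_word)"
    using assms(1) by (simp add: fin_supp_iff_in_span_words)
  then show ?thesis
  proof (induction rule: fa.span_induct)
    case base
    show ?case
      by (auto simp: fa.subspace_def fa_mul_add_left fa_mul_smult_left fa_mul_zero_left)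
  qed (auto simp: words)
qed

lemma fs_linear_mul_left: "fin_supp g \<Longrightarrow> fs_linear (\<lambda>f. fa_mul f g)"
  and fs_linear_mul_right: "fin_supp f \<Longrightarrow> fs_linear (fa_mul f)"
  unfolding fs_linear_def
  by (simp_all add: fa_mul_add_left fa_mul_add_right fa_mul_smult_left fa_mul_smult_right)

lemma fa_mul_assoc:
  assumes "fin_supp f" "fin_supp g" "fin_supp h"
  shows "fa_mul (fa_mul f g) h = fa_mul f (fa_mul g h)"
proof -
  have words: "fa_mul (fa_word (u @ v)) h = fa_mul (fa_word u) (fa_mul (fa_word v) h)"
    for u v
    by (rule fs_linear_eqI[OF _ fs_linear_comp[OF fs_linear_mul_right fs_linear_mul_right] _ assms(3)])
      (simp_all add: fs_linear_mul_right)
  have prefix: "fa_mul (fa_mul (fa_word u) g) h = fa_mul (fa_word u) (fa_mul g h)" for u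
    by (rule fs_linear_eqI[OF fs_linear_comp[OF fs_linear_mul_left fs_linear_mul_right]
          fs_linear_comp[OF fs_linear_mul_right fs_linear_mul_left] _ assms(2)])
      (simp_all add: assms words)
  show ?thesis
    by (rule fs_linear_eqI[OF fs_linear_comp[OF fs_linear_mul_left fs_linear_mul_left]
          fs_linear_mul_left _ assms(1)]) (simp_all add: assms prefix)
qed

definition lmul :: "cur \<Rightarrow> fa \<Rightarrow> fa" where
  "lmul x f = fa_mul (fa_word [x]) f"

lemma lmul_word [simp]: "lmul x (fa_word w) = fa_word (x # w)"
  by (simp add: lmul_def)

lemma fs_linear_lmul: "fs_linear (lmul x)"
  unfolding lmul_def by (simp add: fs_linear_mul_right)

lemma lmul_add: "lmul x (f + g) = lmul x f + lmul x g"
  and lmul_diff: "lmul x (f - g) = lmul x f - lmul x g"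
  and lmul_smult: "lmul x (fa_smult c f) = fa_smult c (lmul x f)"
  and lmul_zero: "lmul x 0 = 0"
  and fin_supp_lmul [simp]: "fin_supp f \<Longrightarrow> fin_supp (lmul x f)"
  by (simp_all add: lmul_def fa_mul_add_right fa_mul_diff_right fa_mul_smult_right fa_mul_zero_right)

unbundle fps_syntax

section \<open>The current algebra\<close>

definition cur_smult :: "complex \<Rightarrow> cur \<Rightarrow> cur" where
  "cur_smult c x = (\<lambda>k a b. c * x k a b)"

definition lower :: "cur \<Rightarrow> cur" where
  "lower x = (\<lambda>k a b. if b < a then x k a b else 0)"

definition upper :: "cur \<Rightarrow> cur" where
  "upper x = (\<lambda>k a b. if a \<le> b then x k a b else 0)"

lemma cur_smult_zero_left [simp]: "cur_smult 0 x = 0"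
  by (simp add: cur_smult_def fun_eq_iff)

text \<open>Via \<open>cur_mat\<close> a current is an \<open>n \<times> n\<close> matrix of formal power series in \<open>t\<close>, and
  \<^const>\<open>bracket\<close> becomes the matrix commutator; bilinearity and the Jacobi identity then follow
  from the ring laws.\<close>

definition cur_mat :: "cur \<Rightarrow> nat \<Rightarrow> nat \<Rightarrow> complex fps" where
  "cur_mat x a b = Abs_fps (\<lambda>k. x k a b)"

definition mat_mul ::
  "nat \<Rightarrow> (nat \<Rightarrow> nat \<Rightarrow> complex fps) \<Rightarrow> (nat \<Rightarrow> nat \<Rightarrow> complex fps) \<Rightarrow> nat \<Rightarrow> nat \<Rightarrow> complex fps"
  where "mat_mul n A B = (\<lambda>a b. \<Sum>c\<in>{1..n}. A a c * B c b)"

lemma cur_mat_nth [simp]: "cur_mat x a b $ k = x k a b"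
  by (simp add: cur_mat_def)

lemma cur_mat_inj: "cur_mat x = cur_mat y \<Longrightarrow> x = y"
  by (metis cur_mat_nth ext)

lemma cur_mat_add: "cur_mat (x + y) = cur_mat x + cur_mat y"
  and cur_mat_diff: "cur_mat (x - y) = cur_mat x - cur_mat y"
  and cur_mat_uminus: "cur_mat (- x) = - cur_mat x"
  and cur_mat_zero: "cur_mat 0 = 0"
  and cur_mat_cur_smult: "cur_mat (cur_smult c x) = (\<lambda>a b. fps_const c * cur_mat x a b)"
  by (intro ext fps_ext; simp add: cur_smult_def)+

lemma cur_mat_bracket:
  "cur_mat (bracket n x y) = mat_mul n (cur_mat x) (cur_mat y) - mat_mul n (cur_mat y) (cur_mat x)"
proof (intro ext fps_ext)
  fix a b k
  have "(mat_mul n (cur_mat x) (cur_mat y) - mat_mul n (cur_mat y) (cur_mat x)) a b $ k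
      = (\<Sum>c\<in>{1..n}. \<Sum>p\<in>{..k}. x p a c * y (k - p) c b)
        - (\<Sum>c\<in>{1..n}. \<Sum>p\<in>{..k}. x p c b * y (k - p) a c)"
    by (simp add: mat_mul_def fps_sum_nth fps_mult_nth atLeast0AtMost mult.commute)
  also have "\<dots> = (\<Sum>p\<in>{..k}. \<Sum>c\<in>{1..n}. x p a c * y (k - p) c b)
        - (\<Sum>p\<in>{..k}. \<Sum>c\<in>{1..n}. x p c b * y (k - p) a c)"
    by (rule arg_cong2[where f=minus]; rule sum.swap)
  also have "\<dots> = bracket n x y k a b"
    unfolding bracket_def by (simp add: sum_subtractf mult.commute)
  finally show "cur_mat (bracket n x y) a b $ k
      = (mat_mul n (cur_mat x) (cur_mat y) - mat_mul n (cur_mat y) (cur_mat x)) a b $ k"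
    by simp
qed

lemma mat_mul_assoc: "mat_mul n (mat_mul n A B) C = mat_mul n A (mat_mul n B C)"
  unfolding mat_mul_def
  by (intro ext) (simp add: sum_distrib_left sum_distrib_right mult.assoc, rule sum.swap)

lemma mat_mul_add_left: "mat_mul n (A + B) C = mat_mul n A C + mat_mul n B C"
  and mat_mul_add_right: "mat_mul n C (A + B) = mat_mul n C A + mat_mul n C B"
  and mat_mul_diff_left: "mat_mul n (A - B) C = mat_mul n A C - mat_mul n B C"
  and mat_mul_diff_right: "mat_mul n C (A - B) = mat_mul n C A - mat_mul n C B"
  and mat_mul_uminus_left: "mat_mul n (- A) C = - mat_mul n A C"
  and mat_mul_uminus_right: "mat_mul n C (- A) = - mat_mul n C A"
  and mat_mul_const_left:
    "mat_mul n (\<lambda>a b. fps_const c * A a b) C = (\<lambda>a b. fps_const c * mat_mul n A C a b)"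
  and mat_mul_const_right:
    "mat_mul n C (\<lambda>a b. fps_const c * A a b) = (\<lambda>a b. fps_const c * mat_mul n C A a b)"
  unfolding mat_mul_def
  by (intro ext; simp add: algebra_simps sum.distrib sum_subtractf sum_negf sum_distrib_left)+

lemmas cur_mat_simps = cur_mat_add cur_mat_diff cur_mat_uminus cur_mat_zero cur_mat_cur_smult
  cur_mat_bracket mat_mul_add_left mat_mul_add_right mat_mul_diff_left mat_mul_diff_right
  mat_mul_uminus_left mat_mul_uminus_right mat_mul_const_left mat_mul_const_right

lemma bracket_add_left: "bracket n (x + y) z = bracket n x z + bracket n y z"
  and bracket_add_right: "bracket n z (x + y) = bracket n z x + bracket n z y"
  and bracket_diff_left: "bracket n (x - y) z = bracket n x z - bracket n y z"
  and bracket_antisym: "bracket n y x = - bracket n x y"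
  and bracket_jacobi: "bracket n x (bracket n y z) = bracket n (bracket n x y) z + bracket n y (bracket n x z)"
  by (rule cur_mat_inj; simp add: cur_mat_simps mat_mul_assoc algebra_simps)+

lemma bracket_cur_smult_left: "bracket n (cur_smult c x) y = cur_smult c (bracket n x y)"
  and bracket_cur_smult_right: "bracket n y (cur_smult c x) = cur_smult c (bracket n y x)"
  by (rule cur_mat_inj; simp add: cur_mat_simps fun_eq_iff algebra_simps)+

lemma trace_bracket: "(\<Sum>a\<in>{1..n}. bracket n x y k a a) = 0"
proof -
  have "(\<Sum>a\<in>{1..n}. mat_mul n (cur_mat x) (cur_mat y) a a)
      = (\<Sum>a\<in>{1..n}. mat_mul n (cur_mat y) (cur_mat x) a a)"
    unfolding mat_mul_def by (subst sum.swap) (simp add: mult.commute)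
  then have "(\<Sum>a\<in>{1..n}. cur_mat (bracket n x y) a a) $ k = 0"
    by (simp add: cur_mat_bracket sum_subtractf)
  then show ?thesis
    by (simp add: fps_sum_nth)
qed

lemma valid_bound:
  assumes "valid n x"
  obtains N where "\<And>k a b. N < k \<Longrightarrow> x k a b = 0"
proof -
  obtain N where "\<forall>k\<in>{k. x k \<noteq> (\<lambda>a b. 0)}. k \<le> N"
    using assms unfolding valid_def finite_nat_set_iff_bounded_le by blast
  then show ?thesis
    by (intro that[of N]) (metis (mono_tags) leD mem_Collect_eq)
qed

lemma validI:
  assumes "\<And>k a b. N < k \<Longrightarrow> x k a b = 0"
    and "\<And>k a b. a \<notin> {1..n} \<or> b \<notin> {1..n} \<Longrightarrow> x k a b = 0"
    and "\<And>k. (\<Sum>a\<in>{1..n}. x k a a) = 0"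
  shows "valid n x"
proof -
  have "{k. x k \<noteq> (\<lambda>a b. 0)} \<subseteq> {..N}"
    using assms(1) by (auto simp: fun_eq_iff) (meson not_le)
  then show ?thesis
    unfolding valid_def using assms(2,3) finite_subset by blast
qed

lemma valid_zero [simp]: "valid n 0"
  by (rule validI[of 0]) simp_all

lemma valid_add [simp]: "valid n x \<Longrightarrow> valid n y \<Longrightarrow> valid n (x + y)"
proof -
  assume "valid n x" "valid n y"
  moreover obtain N1 N2 where "\<And>k a b. N1 < k \<Longrightarrow> x k a b = 0" "\<And>k a b. N2 < k \<Longrightarrow> y k a b = 0"
    using valid_bound calculation by metis
  ultimately show ?thesis
    by (intro validI[of "max N1 N2"]) (simp_all add: valid_def sum.distrib)
qed

lemma valid_cur_smult [simp]:
  assumes "valid n x"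
  shows "valid n (cur_smult c x)"
proof -
  obtain N where "\<And>k a b. N < k \<Longrightarrow> x k a b = 0"
    using valid_bound assms by metis
  with assms show ?thesis
    by (intro validI[of N]) (simp_all add: cur_smult_def valid_def flip: sum_distrib_left)
qed

lemma valid_uminus [simp]:
  assumes "valid n x"
  shows "valid n (- x)"
proof -
  have "cur_smult (-1) x = - x"
    by (simp add: fun_eq_iff cur_smult_def)
  then show ?thesis
    using valid_cur_smult[OF assms, of "-1"] by simp
qed

lemma valid_diff [simp]: "valid n x \<Longrightarrow> valid n y \<Longrightarrow> valid n (x - y)"
  using valid_add[of n x "- y"] by simp

lemma valid_bracket [simp]:
  assumes "valid n x" "valid n y"
  shows "valid n (bracket n x y)"
proof -
  obtain N1 N2 where N: "\<And>k a b. N1 < k \<Longrightarrow> x k a b = 0" "\<And>k a b. N2 < k \<Longrightarrow> y k a b = 0"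
    using valid_bound assms by metis
  show ?thesis
  proof (rule validI[of "N1 + N2"])
    fix k a b assume k: "N1 + N2 < k"
    have "x p a c * y (k - p) c b - y (k - p) a c * x p c b = 0" if "p \<in> {..k}" for p c
    proof (cases "N1 < p")
      case True
      then show ?thesis using N(1) by simp
    next
      case False
      then have "N2 < k - p" using k by linarith
      then show ?thesis using N(2) by simp
    qed
    then show "bracket n x y k a b = 0"
      unfolding bracket_def by simp
  next
    fix k a b assume "a \<notin> {1..n} \<or> b \<notin> {1..n}"
    then show "bracket n x y k a b = 0"
      using assms unfolding bracket_def valid_def by auto
  qed (rule trace_bracket)
qed

lemma valid_lower [simp]: "valid n x \<Longrightarrow> valid n (lower x)"
  and valid_upper [simp]: "valid n x \<Longrightarrow> valid n (upper x)"
proof -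
  assume x: "valid n x"
  then obtain N where "\<And>k a b. N < k \<Longrightarrow> x k a b = 0"
    using valid_bound by metis
  with x show "valid n (lower x)" "valid n (upper x)"
    by (intro validI[of N]; simp add: lower_def upper_def valid_def)+
qed

lemma lower_plus_upper: "x = lower x + upper x"
  by (simp add: fun_eq_iff lower_def upper_def)

lemma lower_zero [simp]: "lower 0 = 0"
  and upper_zero [simp]: "upper 0 = 0"
  and lower_add: "lower (x + y) = lower x + lower y"
  and upper_add: "upper (x + y) = upper x + upper y"
  and lower_cur_smult: "lower (cur_smult c x) = cur_smult c (lower x)"
  and upper_cur_smult: "upper (cur_smult c x) = cur_smult c (upper x)"
  by (simp_all add: fun_eq_iff lower_def upper_def cur_smult_def)

lemma in_nminus_lower [simp]: "in_nminus (lower x)"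
  and in_bplus_upper [simp]: "in_bplus (upper x)"
  by (simp_all add: in_nminus_def in_bplus_def lower_def upper_def)

lemma in_nminus_entry_zero: "in_nminus x \<Longrightarrow> a \<le> b \<Longrightarrow> x k a b = 0"
  and in_bplus_entry_zero: "in_bplus x \<Longrightarrow> b < a \<Longrightarrow> x k a b = 0"
  unfolding in_nminus_def in_bplus_def by (meson leD not_le)+

lemma lower_nminus: "in_nminus x \<Longrightarrow> lower x = x"
  and upper_nminus: "in_nminus x \<Longrightarrow> upper x = 0"
  and upper_bplus: "in_bplus x \<Longrightarrow> upper x = x"
  and lower_bplus: "in_bplus x \<Longrightarrow> lower x = 0"
  by (auto simp: fun_eq_iff lower_def upper_def not_less not_le
      intro: in_nminus_entry_zero in_bplus_entry_zero)

lemma in_nminus_add: "in_nminus x \<Longrightarrow> in_nminus y \<Longrightarrow> in_nminus (x + y)"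
  unfolding in_nminus_def by (metis add.right_neutral plus_fun_apply)

lemma in_nminus_cur_smult: "in_nminus x \<Longrightarrow> in_nminus (cur_smult c x)"
  and in_nminus_zero [simp]: "in_nminus 0"
  by (auto simp: in_nminus_def cur_smult_def)

lemma in_nminus_bracket:
  assumes "in_nminus x" "in_nminus y"
  shows "in_nminus (bracket n x y)"
  unfolding in_nminus_def
proof (intro allI impI)
  fix k a b assume "bracket n x y k a b \<noteq> 0"
  then obtain p c where "x p a c * y (k - p) c b \<noteq> 0 \<or> y (k - p) a c * x p c b \<noteq> 0"
    unfolding bracket_def by (metis (no_types, lifting) diff_self sum.neutral)
  moreover have "x p a c \<noteq> 0 \<Longrightarrow> c < a" "y (k - p) c b \<noteq> 0 \<Longrightarrow> b < c"
    "y (k - p) a c \<noteq> 0 \<Longrightarrow> c < a" "x p c b \<noteq> 0 \<Longrightarrow> b < c"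
    using assms by (simp_all add: in_nminus_def)
  ultimately show "b < a"
    by auto
qed

lemma in_bplus_bracket:
  assumes "in_bplus x" "in_bplus y"
  shows "in_bplus (bracket n x y)"
  unfolding in_bplus_def
proof (intro allI impI)
  fix k a b assume "bracket n x y k a b \<noteq> 0"
  then obtain p c where "x p a c * y (k - p) c b \<noteq> 0 \<or> y (k - p) a c * x p c b \<noteq> 0"
    unfolding bracket_def by (metis (no_types, lifting) diff_self sum.neutral)
  moreover have "x p a c \<noteq> 0 \<Longrightarrow> a \<le> c" "y (k - p) c b \<noteq> 0 \<Longrightarrow> c \<le> b"
    "y (k - p) a c \<noteq> 0 \<Longrightarrow> a \<le> c" "x p c b \<noteq> 0 \<Longrightarrow> c \<le> b"
    using assms by (simp_all add: in_bplus_def)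
  ultimately show "a \<le> b"
    by auto
qed

definition ecur :: "nat \<Rightarrow> nat \<Rightarrow> nat \<Rightarrow> cur" where
  "ecur a0 b0 k = (\<lambda>k' a b. if k' = k \<and> a = a0 \<and> b = b0 then 1 else 0)"

lemma mat_mul_ecur:
  assumes "b0 \<in> {1..n}"
  shows "mat_mul n (cur_mat (ecur a0 b0 k)) (cur_mat (ecur c0 d0 j))
    = cur_mat (if b0 = c0 then ecur a0 d0 (k + j) else 0)"
proof (intro ext)
  fix a b
  have entry: "cur_mat (ecur a0 b0 k) a b = (if a = a0 \<and> b = b0 then fps_X ^ k else 0)"
    for a0 b0 k a b
    by (rule fps_ext) (simp add: ecur_def)
  have "mat_mul n (cur_mat (ecur a0 b0 k)) (cur_mat (ecur c0 d0 j)) a b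
      = (\<Sum>c\<in>{1..n}. if c = b0 then (if a = a0 \<and> b0 = c0 \<and> b = d0 then fps_X ^ k * fps_X ^ j else 0) else 0)"
    unfolding mat_mul_def entry by (rule sum.cong) auto
  also have "\<dots> = cur_mat (if b0 = c0 then ecur a0 d0 (k + j) else 0) a b"
    using assms by (simp add: entry power_add cur_mat_zero)
  finally show "mat_mul n (cur_mat (ecur a0 b0 k)) (cur_mat (ecur c0 d0 j)) a b
      = cur_mat (if b0 = c0 then ecur a0 d0 (k + j) else 0) a b" .
qed

lemma bracket_ecur:
  assumes "b0 \<in> {1..n}" "d0 \<in> {1..n}"
  shows "bracket n (ecur a0 b0 k) (ecur c0 d0 j)
     = (if b0 = c0 then ecur a0 d0 (k + j) else 0) - (if d0 = a0 then ecur c0 b0 (k + j) else 0)"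
  by (rule cur_mat_inj)
    (simp add: cur_mat_bracket mat_mul_ecur[OF assms(1)] mat_mul_ecur[OF assms(2)] cur_mat_diff
      add.commute)

lemma valid_ecur: "a0 \<in> {1..n} \<Longrightarrow> b0 \<in> {1..n} \<Longrightarrow> a0 \<noteq> b0 \<Longrightarrow> valid n (ecur a0 b0 k)"
  by (rule validI[of k]) (auto simp: ecur_def intro: sum.neutral)

lemma valid_ecur_diag_diff:
  assumes "a0 \<in> {1..n}" "b0 \<in> {1..n}"
  shows "valid n (ecur a0 a0 k - ecur b0 b0 k)"
proof (rule validI[of k])
  fix k'
  show "(\<Sum>a\<in>{1..n}. (ecur a0 a0 k - ecur b0 b0 k) k' a a) = 0"
    using assms by (cases "k' = k") (simp_all add: ecur_def sum_subtractf)
qed (use assms in \<open>auto simp: ecur_def\<close>)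

lemma rels_eq:
  "rels n =
     {fa_word [x] | x. \<not> valid n x}
   \<union> {fa_word [x + y] - fa_word [x] - fa_word [y] | x y. valid n x \<and> valid n y}
   \<union> {fa_word [cur_smult c x] - fa_smult c (fa_word [x]) | c x. valid n x}
   \<union> {fa_word [x, y] - fa_word [y, x] - fa_word [bracket n x y] | x y. valid n x \<and> valid n y}"
proof -
  have "(\<lambda>k a b. x k a b + y k a b) = x + y" "(\<lambda>k a b. c * x k a b) = cur_smult c x"
    for x y :: cur and c
    by (simp_all add: fun_eq_iff cur_smult_def)
  then show ?thesis
    unfolding rels_def by (simp add: fa_gen_def fa_diff_eq_minus fa_add_eq_plus diff_diff_eq)
qed

lemma fin_supp_rels: "\<rho> \<in> rels n \<Longrightarrow> fin_supp \<rho>"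
  unfolding rels_eq by auto

definition ideal_gens :: "nat \<Rightarrow> fa set" where
  "ideal_gens n = {fa_mul (fa_mul a \<rho>) b | a \<rho> b. fin_supp a \<and> fin_supp b \<and> \<rho> \<in> rels n}"

definition Jleft_gens :: "nat \<Rightarrow> fa set" where
  "Jleft_gens n = {fa_mul a (fa_word [y]) | a y. fin_supp a \<and> valid n y \<and> in_bplus y}"

lemma ideal_eq_span: "ideal n = fa.span (ideal_gens n)"
  by (simp add: ideal_def ideal_gens_def cspan_eq_span)

lemma Jleft_eq_span: "Jleft n = fa.span (Jleft_gens n \<union> ideal_gens n)"
  by (simp add: Jleft_def Jleft_gens_def ideal_eq_span cspan_eq_span fa.span_Un fa_add_eq_plus
      fa_gen_def)

lemma fin_supp_ideal_gens: "g \<in> ideal_gens n \<Longrightarrow> fin_supp g"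
  and fin_supp_Jleft_gens: "g \<in> Jleft_gens n \<Longrightarrow> fin_supp g"
  by (auto simp: ideal_gens_def Jleft_gens_def fin_supp_rels)

lemma ideal_word_rel_word: "\<rho> \<in> rels n \<Longrightarrow> fa_mul (fa_mul (fa_word u) \<rho>) (fa_word w) \<in> ideal n"
  unfolding ideal_eq_span ideal_gens_def by (rule fa.span_base) (blast intro: fin_supp_word)

lemma rels_additive: "valid n x \<Longrightarrow> valid n y \<Longrightarrow> fa_word [x + y] - fa_word [x] - fa_word [y] \<in> rels n"
  and rels_homogeneous: "valid n x \<Longrightarrow> fa_word [cur_smult c x] - fa_smult c (fa_word [x]) \<in> rels n"
  and rels_commutator:
    "valid n x \<Longrightarrow> valid n y \<Longrightarrow> fa_word [x, y] - fa_word [y, x] - fa_word [bracket n x y] \<in> rels n"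
  unfolding rels_eq by blast+

lemma ideal_additive:
  "valid n x \<Longrightarrow> valid n y \<Longrightarrow>
    fa_word (u @ (x + y) # w) - fa_word (u @ x # w) - fa_word (u @ y # w) \<in> ideal n"
  using ideal_word_rel_word[OF rels_additive[of n x y], of u w]
  by (simp add: fa_mul_diff_left fa_mul_diff_right)

lemma ideal_homogeneous:
  "valid n x \<Longrightarrow> fa_word (u @ cur_smult c x # w) - fa_smult c (fa_word (u @ x # w)) \<in> ideal n"
  using ideal_word_rel_word[OF rels_homogeneous[of n x c], of u w]
  by (simp add: fa_mul_diff_left fa_mul_diff_right fa_mul_smult_left fa_mul_smult_right)

lemma ideal_commutator:
  "valid n x \<Longrightarrow> valid n y \<Longrightarrow>
    fa_word (u @ x # y # w) - fa_word (u @ y # x # w) - fa_word (u @ bracket n x y # w) \<in> ideal n"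
  using ideal_word_rel_word[OF rels_commutator[of n x y], of u w]
  by (simp add: fa_mul_diff_left fa_mul_diff_right)

lemma subspace_ideal: "fa.subspace (ideal n)"
  by (simp add: ideal_eq_span)

lemma ideal_subset_Jleft: "g \<in> ideal n \<Longrightarrow> g \<in> Jleft n"
  unfolding ideal_eq_span Jleft_eq_span using fa.span_mono[of "ideal_gens n"] by blast

lemma subspace_Jleft: "fa.subspace (Jleft n)"
  by (simp add: Jleft_eq_span)

lemma Jleft_gen_in_Jleft: "fin_supp a \<Longrightarrow> valid n y \<Longrightarrow> in_bplus y \<Longrightarrow> fa_mul a (fa_word [y]) \<in> Jleft n"
  unfolding Jleft_eq_span Jleft_gens_def by (rule fa.span_base) blast

lemma lmul_ideal_gens: "g \<in> ideal_gens n \<Longrightarrow> lmul x g \<in> ideal_gens n"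
proof -
  assume "g \<in> ideal_gens n"
  then obtain a \<rho> b where g: "g = fa_mul (fa_mul a \<rho>) b" "fin_supp a" "fin_supp b" "\<rho> \<in> rels n"
    unfolding ideal_gens_def by blast
  then have "lmul x g = fa_mul (fa_mul (fa_mul (fa_word [x]) a) \<rho>) b"
    by (simp add: lmul_def fa_mul_assoc fin_supp_rels)
  then show ?thesis
    using g fin_supp_mul[OF fin_supp_word g(2)] unfolding ideal_gens_def by blast
qed

lemma lmul_Jleft_gens: "g \<in> Jleft_gens n \<Longrightarrow> lmul x g \<in> Jleft_gens n"
proof -
  assume "g \<in> Jleft_gens n"
  then obtain a y where g: "g = fa_mul a (fa_word [y])" "fin_supp a" "valid n y" "in_bplus y"
    unfolding Jleft_gens_def by blast
  then have "lmul x g = fa_mul (fa_mul (fa_word [x]) a) (fa_word [y])"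
    by (simp add: lmul_def fa_mul_assoc)
  then show ?thesis
    using g fin_supp_mul[OF fin_supp_word g(2)] unfolding Jleft_gens_def by blast
qed

lemma lmul_Jleft: "g \<in> Jleft n \<Longrightarrow> lmul x g \<in> Jleft n"
  unfolding Jleft_eq_span
  by (erule fs_linear_in_subspace[OF _ fs_linear_lmul fa.subspace_span])
    (auto intro: fa.span_base lmul_Jleft_gens lmul_ideal_gens fin_supp_Jleft_gens fin_supp_ideal_gens)

section \<open>The representation of \<open>U(\<^bold>g[t])\<close> on \<open>U(\<^bold>n\<^sup>-[t])\<close>\<close>

locale sl_current =
  fixes n :: nat
begin

abbreviation br :: "cur \<Rightarrow> cur \<Rightarrow> cur" where
  "br \<equiv> bracket n"

definition nm_elt :: "cur \<Rightarrow> bool" where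
  "nm_elt x \<longleftrightarrow> valid n x \<and> in_nminus x"

definition bp_elt :: "cur \<Rightarrow> bool" where
  "bp_elt x \<longleftrightarrow> valid n x \<and> in_bplus x"

definition nm_words :: "cur list set" where
  "nm_words = {w. \<forall>x\<in>set w. nm_elt x}"

text \<open>\<open>Unm\<close> is the span of all words in \<open>\<^bold>n\<^sup>-[t]\<close> and \<open>Knm\<close> the span of the defining relations
  of \<open>U(\<^bold>n\<^sup>-[t])\<close> placed between two such words, so that \<open>Unm / Knm\<close> is \<open>U(\<^bold>n\<^sup>-[t])\<close>.
  On this quotient \<open>\<^bold>n\<^sup>-[t]\<close> acts by left multiplication (\<^const>\<open>lmul\<close>) and \<open>\<^bold>b\<^sup>+[t]\<close> by the
  operators \<open>bact\<close> below, which annihilate the empty word: the module induced from the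
  trivial representation of \<open>\<^bold>b\<^sup>+[t]\<close>.\<close>

abbreviation Unm :: "fa set" where
  "Unm \<equiv> fa.span (fa_word ` nm_words)"

definition nm_rel_gens :: "fa set" where
  "nm_rel_gens =
     {fa_word (u @ (x + y) # w) - fa_word (u @ x # w) - fa_word (u @ y # w) | u x y w.
        u \<in> nm_words \<and> w \<in> nm_words \<and> nm_elt x \<and> nm_elt y}
   \<union> {fa_word (u @ cur_smult c x # w) - fa_smult c (fa_word (u @ x # w)) | u c x w.
        u \<in> nm_words \<and> w \<in> nm_words \<and> nm_elt x}
   \<union> {fa_word (u @ x # y # w) - fa_word (u @ y # x # w) - fa_word (u @ br x y # w) | u x y w.
        u \<in> nm_words \<and> w \<in> nm_words \<and> nm_elt x \<and> nm_elt y}"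

abbreviation Knm :: "fa set" where
  "Knm \<equiv> fa.span nm_rel_gens"

lemma nm_elt_valid: "nm_elt x \<Longrightarrow> valid n x"
  and bp_elt_valid: "bp_elt x \<Longrightarrow> valid n x"
  and nm_elt_zero [simp]: "nm_elt 0"
  and nm_elt_lower [simp]: "valid n x \<Longrightarrow> nm_elt (lower x)"
  and bp_elt_upper [simp]: "valid n x \<Longrightarrow> bp_elt (upper x)"
  and nm_elt_add: "nm_elt x \<Longrightarrow> nm_elt y \<Longrightarrow> nm_elt (x + y)"
  and nm_elt_cur_smult: "nm_elt x \<Longrightarrow> nm_elt (cur_smult c x)"
  and nm_elt_bracket: "nm_elt x \<Longrightarrow> nm_elt y \<Longrightarrow> nm_elt (br x y)"
  by (simp_all add: nm_elt_def bp_elt_def in_nminus_add in_nminus_cur_smult in_nminus_bracket)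

lemma nm_words_Nil [simp]: "[] \<in> nm_words"
  and nm_words_Cons [simp]: "x # w \<in> nm_words \<longleftrightarrow> nm_elt x \<and> w \<in> nm_words"
  and nm_words_append [simp]: "u @ w \<in> nm_words \<longleftrightarrow> u \<in> nm_words \<and> w \<in> nm_words"
  by (auto simp: nm_words_def)

lemma Nminus_eq_Unm: "Nminus n = Unm"
  unfolding Nminus_def cspan_eq_span nm_words_def nm_elt_def by (simp add: setcompr_eq_image)

lemma word_in_Unm: "w \<in> nm_words \<Longrightarrow> fa_word w \<in> Unm"
  by (simp add: fa.span_base)

lemma fin_supp_Unm [simp]: "f \<in> Unm \<Longrightarrow> fin_supp f"
  by (rule fin_supp_span) auto

lemma nm_rel_gensE:
  assumes "g \<in> nm_rel_gens"
  obtains (additive) u x y w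
    where "g = fa_word (u @ (x + y) # w) - fa_word (u @ x # w) - fa_word (u @ y # w)"
      "u \<in> nm_words" "w \<in> nm_words" "nm_elt x" "nm_elt y"
  | (homogeneous) u c x w
    where "g = fa_word (u @ cur_smult c x # w) - fa_smult c (fa_word (u @ x # w))"
      "u \<in> nm_words" "w \<in> nm_words" "nm_elt x"
  | (commutator) u x y w
    where "g = fa_word (u @ x # y # w) - fa_word (u @ y # x # w) - fa_word (u @ br x y # w)"
      "u \<in> nm_words" "w \<in> nm_words" "nm_elt x" "nm_elt y"
  using assms unfolding nm_rel_gens_def by blast

lemma nm_rel_gens_in_Unm: "g \<in> nm_rel_gens \<Longrightarrow> g \<in> Unm"
  by (elim nm_rel_gensE)
    (simp_all add: fa.span_diff fa.span_scale word_in_Unm nm_elt_add nm_elt_cur_smult nm_elt_bracket)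

lemma Knm_subset_Unm: "f \<in> Knm \<Longrightarrow> f \<in> Unm"
  using fa.span_minimal[OF _ fa.subspace_span, of nm_rel_gens] nm_rel_gens_in_Unm by auto

lemma fin_supp_Knm: "f \<in> Knm \<Longrightarrow> fin_supp f"
  using Knm_subset_Unm fin_supp_Unm by blast

lemma Knm_additive:
  "u \<in> nm_words \<Longrightarrow> w \<in> nm_words \<Longrightarrow> nm_elt x \<Longrightarrow> nm_elt y \<Longrightarrow>
    fa_word (u @ (x + y) # w) - fa_word (u @ x # w) - fa_word (u @ y # w) \<in> Knm"
  and Knm_homogeneous:
  "u \<in> nm_words \<Longrightarrow> w \<in> nm_words \<Longrightarrow> nm_elt x \<Longrightarrow>
    fa_word (u @ cur_smult c x # w) - fa_smult c (fa_word (u @ x # w)) \<in> Knm"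
  and Knm_commutator:
  "u \<in> nm_words \<Longrightarrow> w \<in> nm_words \<Longrightarrow> nm_elt x \<Longrightarrow> nm_elt y \<Longrightarrow>
    fa_word (u @ x # y # w) - fa_word (u @ y # x # w) - fa_word (u @ br x y # w) \<in> Knm"
  unfolding nm_rel_gens_def by (rule fa.span_base, blast)+

lemma Knm_zero_letter: "u \<in> nm_words \<Longrightarrow> w \<in> nm_words \<Longrightarrow> fa_word (u @ 0 # w) \<in> Knm"
  using Knm_homogeneous[of u w 0 0] by simp

lemma lmul_in_Unm: "nm_elt x \<Longrightarrow> f \<in> Unm \<Longrightarrow> lmul x f \<in> Unm"
  by (rule fs_linear_in_subspace[OF _ fs_linear_lmul fa.subspace_span]) (auto intro: fa.span_base)

lemma lmul_gen_in_Knm: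
  assumes "nm_elt x" "g \<in> nm_rel_gens"
  shows "lmul x g \<in> Knm"
  using assms(2)
proof (cases rule: nm_rel_gensE)
  case (additive u y z w)
  then show ?thesis
    using Knm_additive[of "x # u" w y z] assms(1) by (simp add: lmul_diff)
next
  case (homogeneous u c y w)
  then show ?thesis
    using Knm_homogeneous[of "x # u" w y c] assms(1) by (simp add: lmul_diff lmul_smult)
next
  case (commutator u y z w)
  then show ?thesis
    using Knm_commutator[of "x # u" w y z] assms(1) by (simp add: lmul_diff)
qed

lemma lmul_in_Knm: "nm_elt x \<Longrightarrow> f \<in> Knm \<Longrightarrow> lmul x f \<in> Knm"
  by (rule fs_linear_in_subspace[OF _ fs_linear_lmul fa.subspace_span])
    (auto intro: fin_supp_Knm fa.span_base lmul_gen_in_Knm)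

lemma lmul_add_cur:
  assumes "nm_elt x" "nm_elt y" "f \<in> Unm"
  shows "lmul (x + y) f - lmul x f - lmul y f \<in> Knm"
proof -
  have "fs_linear (\<lambda>f. lmul (x + y) f - lmul x f - lmul y f)"
    by (intro fs_linear_minus fs_linear_lmul)
  then show ?thesis
    by (rule fs_linear_in_subspace[OF assms(3) _ fa.subspace_span])
      (use Knm_additive[of "[]" _ x y] assms in auto)
qed

lemma lmul_smult_cur:
  assumes "nm_elt x" "f \<in> Unm"
  shows "lmul (cur_smult c x) f - fa_smult c (lmul x f) \<in> Knm"
proof -
  have "fs_linear (\<lambda>f. lmul (cur_smult c x) f - fa_smult c (lmul x f))"
    by (intro fs_linear_minus fs_linear_lmul fs_linear_scaled)
  then show ?thesis
    by (rule fs_linear_in_subspace[OF assms(2) _ fa.subspace_span])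
      (use Knm_homogeneous[of "[]" _ x c] assms in auto)
qed

lemma lmul_commutator:
  assumes "nm_elt x" "nm_elt y" "f \<in> Unm"
  shows "lmul x (lmul y f) - lmul y (lmul x f) - lmul (br x y) f \<in> Knm"
proof -
  have "fs_linear (\<lambda>f. lmul x (lmul y f) - lmul y (lmul x f) - lmul (br x y) f)"
    by (intro fs_linear_minus fs_linear_comp[OF fs_linear_lmul fs_linear_lmul] fs_linear_lmul)
  then show ?thesis
    by (rule fs_linear_in_subspace[OF assms(3) _ fa.subspace_span])
      (use Knm_commutator[of "[]" _ x y] assms in auto)
qed

lemma lmul_zero_cur: "f \<in> Unm \<Longrightarrow> lmul 0 f \<in> Knm"
  by (rule fs_linear_in_subspace[OF _ fs_linear_lmul fa.subspace_span])
    (use Knm_zero_letter[of "[]"] in auto)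

definition cong_Knm :: "fa \<Rightarrow> fa \<Rightarrow> bool" (infix \<open>\<approx>\<close> 50) where
  "f \<approx> g \<longleftrightarrow> f - g \<in> Knm"

lemma Knm_iff_cong_zero: "f \<in> Knm \<longleftrightarrow> f \<approx> 0"
  by (simp add: cong_Knm_def)

lemma cong_refl [simp]: "f \<approx> f"
  by (simp add: cong_Knm_def fa.span_zero)

lemma cong_sym: "f \<approx> g \<Longrightarrow> g \<approx> f"
  unfolding cong_Knm_def using fa.span_neg by fastforce

lemma cong_trans [trans]: "f \<approx> g \<Longrightarrow> g \<approx> h \<Longrightarrow> f \<approx> h"
  unfolding cong_Knm_def using fa.span_add by fastforce

lemma eq_cong_trans [trans]: "f = g \<Longrightarrow> g \<approx> h \<Longrightarrow> f \<approx> h"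
  and cong_eq_trans [trans]: "f \<approx> g \<Longrightarrow> g = h \<Longrightarrow> f \<approx> h"
  by simp_all

lemma cong_add: "f1 \<approx> g1 \<Longrightarrow> f2 \<approx> g2 \<Longrightarrow> f1 + f2 \<approx> g1 + g2"
  unfolding cong_Knm_def using fa.span_add by (fastforce simp: algebra_simps)

lemma cong_diff: "f1 \<approx> g1 \<Longrightarrow> f2 \<approx> g2 \<Longrightarrow> f1 - f2 \<approx> g1 - g2"
  unfolding cong_Knm_def using fa.span_diff by (fastforce simp: algebra_simps)

lemma cong_smult: "f \<approx> g \<Longrightarrow> fa_smult c f \<approx> fa_smult c g"
  unfolding cong_Knm_def using fa.span_scale by (fastforce simp: fa.scale_right_diff_distrib)

lemma cong_lmul: "nm_elt x \<Longrightarrow> f \<approx> g \<Longrightarrow> lmul x f \<approx> lmul x g"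
  unfolding cong_Knm_def by (simp add: lmul_in_Knm flip: lmul_diff)

lemma subspace_cong_closure:
  assumes "fa.subspace A"
  shows "fa.subspace {f. \<exists>c\<in>A. f \<approx> c}"
  unfolding fa.subspace_def
proof (intro conjI ballI allI)
  show "0 \<in> {f. \<exists>c\<in>A. f \<approx> c}"
    using fa.subspace_0[OF assms] cong_refl by blast
next
  fix f g assume "f \<in> {f. \<exists>c\<in>A. f \<approx> c}" "g \<in> {f. \<exists>c\<in>A. f \<approx> c}"
  then show "f + g \<in> {f. \<exists>c\<in>A. f \<approx> c}"
    using fa.subspace_add[OF assms] cong_add by blast
next
  fix c f assume "f \<in> {f. \<exists>c\<in>A. f \<approx> c}"
  then show "fa_smult c f \<in> {f. \<exists>c\<in>A. f \<approx> c}"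
    using fa.subspace_scale[OF assms] cong_smult by blast
qed

text \<open>Moving \<open>b\<close> rightwards past a letter \<open>x\<close> leaves the commutator \<open>[b, x]\<close>, whose
  \<open>\<^bold>n\<^sup>-\<close>-part stays in the word as a letter while its \<open>\<^bold>b\<^sup>+\<close>-part moves on; at the end of the
  word, \<open>\<^bold>b\<^sup>+[t]\<close> acts by zero.\<close>

primrec bact_word :: "cur list \<Rightarrow> cur \<Rightarrow> fa" where
  "bact_word [] b = 0"
| "bact_word (x # w) b =
     lmul x (bact_word w b) + fa_word (lower (br b x) # w) + bact_word w (upper (br b x))"

definition bact :: "cur \<Rightarrow> fa \<Rightarrow> fa" where
  "bact b = word_ext (\<lambda>w. bact_word w b)"

definition gact :: "cur \<Rightarrow> fa \<Rightarrow> fa" where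
  "gact z f = lmul (lower z) f + bact (upper z) f"

lemma fs_linear_bact: "fs_linear (bact b)"
proof -
  have "fin_supp (bact_word w b)" for w
    by (induction w arbitrary: b) simp_all
  then show ?thesis
    unfolding bact_def by (rule fs_linear_word_ext)
qed

lemma bact_fa_word: "bact b (fa_word w) = bact_word w b"
  by (simp add: bact_def)

lemma fs_linear_gact: "fs_linear (gact z)"
  unfolding gact_def by (rule fs_linear_plus[OF fs_linear_lmul fs_linear_bact])

lemmas bact_zero = fs_linear_zero[OF fs_linear_bact]
  and bact_add = fs_linear_add[OF fs_linear_bact]
  and bact_diff = fs_linear_diff[OF fs_linear_bact]
  and bact_smult = fs_linear_smult[OF fs_linear_bact]
  and fin_supp_bact [simp] = fs_linear_fin_supp[OF fs_linear_bact]
  and gact_add = fs_linear_add[OF fs_linear_gact]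
  and gact_diff = fs_linear_diff[OF fs_linear_gact]
  and fin_supp_gact [simp] = fs_linear_fin_supp[OF fs_linear_gact]

lemma bact_lmul: "fin_supp f \<Longrightarrow> bact b (lmul x f) = lmul x (bact b f) + gact (br b x) f"
  by (rule fs_linear_eqI[OF fs_linear_comp[OF fs_linear_bact fs_linear_lmul]
        fs_linear_plus[OF fs_linear_comp[OF fs_linear_lmul fs_linear_bact] fs_linear_gact]])
    (simp_all add: gact_def bact_fa_word add.assoc)

lemma bact_word_in_Unm: "w \<in> nm_words \<Longrightarrow> valid n b \<Longrightarrow> bact_word w b \<in> Unm"
proof (induction w arbitrary: b)
  case Nil
  then show ?case by (simp add: fa.span_zero flip: zero_fun_def)
next
  case (Cons x w)
  then show ?case
    unfolding bact_word.simps
    by (intro fa.span_add lmul_in_Unm word_in_Unm Cons.IH) (simp_all add: nm_elt_valid)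
qed

lemma bact_in_Unm: "valid n b \<Longrightarrow> f \<in> Unm \<Longrightarrow> bact b f \<in> Unm"
  by (rule fs_linear_in_subspace[OF _ fs_linear_bact fa.subspace_span])
    (auto simp: bact_fa_word bact_word_in_Unm)

lemma gact_in_Unm: "valid n z \<Longrightarrow> f \<in> Unm \<Longrightarrow> gact z f \<in> Unm"
  unfolding gact_def by (simp add: fa.span_add lmul_in_Unm bact_in_Unm)

lemma bact_word_add_cur:
  "w \<in> nm_words \<Longrightarrow> valid n b1 \<Longrightarrow> valid n b2 \<Longrightarrow>
    bact_word w (b1 + b2) - bact_word w b1 - bact_word w b2 \<in> Knm"
proof (induction w arbitrary: b1 b2)
  case Nil
  then show ?case by (simp add: fa.span_zero flip: zero_fun_def)
next
  case (Cons x w)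
  let ?l1 = "lower (br b1 x)" and ?l2 = "lower (br b2 x)"
  let ?u1 = "upper (br b1 x)" and ?u2 = "upper (br b2 x)"
  have x: "nm_elt x" "valid n x" and w: "w \<in> nm_words"
    using Cons.prems by (auto simp: nm_elt_valid)
  have "bact_word (x # w) (b1 + b2) - bact_word (x # w) b1 - bact_word (x # w) b2 =
     lmul x (bact_word w (b1 + b2) - bact_word w b1 - bact_word w b2)
     + (fa_word ((?l1 + ?l2) # w) - fa_word (?l1 # w) - fa_word (?l2 # w))
     + (bact_word w (?u1 + ?u2) - bact_word w ?u1 - bact_word w ?u2)"
    by (simp add: bracket_add_left lower_add upper_add lmul_diff lmul_add algebra_simps)
  also have "\<dots> \<in> Knm"
    using Cons.prems x w
    by (intro fa.span_add lmul_in_Knm Cons.IH Knm_additive[of "[]", simplified]) simp_all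
  finally show ?case .
qed

lemma bact_word_smult_cur:
  "w \<in> nm_words \<Longrightarrow> valid n b \<Longrightarrow> bact_word w (cur_smult c b) - fa_smult c (bact_word w b) \<in> Knm"
proof (induction w arbitrary: b)
  case Nil
  then show ?case by (simp add: fa.span_zero flip: zero_fun_def)
next
  case (Cons x w)
  let ?l = "lower (br b x)" and ?u = "upper (br b x)"
  have x: "nm_elt x" "valid n x" and w: "w \<in> nm_words"
    using Cons.prems by (auto simp: nm_elt_valid)
  have "bact_word (x # w) (cur_smult c b) - fa_smult c (bact_word (x # w) b) =
     lmul x (bact_word w (cur_smult c b) - fa_smult c (bact_word w b))
     + (fa_word (cur_smult c ?l # w) - fa_smult c (fa_word (?l # w)))
     + (bact_word w (cur_smult c ?u) - fa_smult c (bact_word w ?u))"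
    by (simp add: bracket_cur_smult_left lower_cur_smult upper_cur_smult lmul_diff lmul_smult
        fa.scale_right_distrib algebra_simps)
  also have "\<dots> \<in> Knm"
    using Cons.prems x w
    by (intro fa.span_add lmul_in_Knm Cons.IH Knm_homogeneous[of "[]", simplified]) simp_all
  finally show ?case .
qed

lemma bact_add_cur:
  assumes "valid n b1" "valid n b2" "f \<in> Unm"
  shows "bact (b1 + b2) f - bact b1 f - bact b2 f \<in> Knm"
proof -
  have "fs_linear (\<lambda>f. bact (b1 + b2) f - bact b1 f - bact b2 f)"
    by (intro fs_linear_minus fs_linear_bact)
  then show ?thesis
    by (rule fs_linear_in_subspace[OF assms(3) _ fa.subspace_span])
      (use assms in \<open>auto simp: bact_fa_word bact_word_add_cur\<close>)
qed

lemma bact_smult_cur: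
  assumes "valid n b" "f \<in> Unm"
  shows "bact (cur_smult c b) f - fa_smult c (bact b f) \<in> Knm"
proof -
  have "fs_linear (\<lambda>f. bact (cur_smult c b) f - fa_smult c (bact b f))"
    by (intro fs_linear_minus fs_linear_scaled fs_linear_bact)
  then show ?thesis
    by (rule fs_linear_in_subspace[OF assms(2) _ fa.subspace_span])
      (use assms in \<open>auto simp: bact_fa_word bact_word_smult_cur\<close>)
qed

lemma bact_zero_cur: "f \<in> Unm \<Longrightarrow> bact 0 f \<in> Knm"
  using bact_smult_cur[of 0 f 0] by simp

lemma gact_add_cur:
  assumes "valid n z1" "valid n z2" "f \<in> Unm"
  shows "gact (z1 + z2) f \<approx> gact z1 f + gact z2 f"
proof -
  have "gact (z1 + z2) f - (gact z1 f + gact z2 f) =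
    (lmul (lower z1 + lower z2) f - lmul (lower z1) f - lmul (lower z2) f)
    + (bact (upper z1 + upper z2) f - bact (upper z1) f - bact (upper z2) f)"
    by (simp add: gact_def lower_add upper_add algebra_simps)
  also have "\<dots> \<in> Knm"
    using assms by (intro fa.span_add lmul_add_cur bact_add_cur) simp_all
  finally show ?thesis
    by (simp add: cong_Knm_def)
qed

lemma gact_smult_cur:
  assumes "valid n z" "f \<in> Unm"
  shows "gact (cur_smult c z) f \<approx> fa_smult c (gact z f)"
proof -
  have "gact (cur_smult c z) f - fa_smult c (gact z f) =
    (lmul (cur_smult c (lower z)) f - fa_smult c (lmul (lower z) f))
    + (bact (cur_smult c (upper z)) f - fa_smult c (bact (upper z) f))"
    by (simp add: gact_def lower_cur_smult upper_cur_smult fa.scale_right_distrib algebra_simps)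
  also have "\<dots> \<in> Knm"
    using assms by (intro fa.span_add lmul_smult_cur bact_smult_cur) simp_all
  finally show ?thesis
    by (simp add: cong_Knm_def)
qed

lemma gact_zero_cur: "f \<in> Unm \<Longrightarrow> gact 0 f \<approx> 0"
  unfolding gact_def Knm_iff_cong_zero[symmetric]
  by (simp add: fa.span_add lmul_zero_cur bact_zero_cur)

lemma gact_diff_cur:
  assumes "valid n z1" "valid n z2" "f \<in> Unm"
  shows "gact (z1 - z2) f \<approx> gact z1 f - gact z2 f"
proof -
  have "gact z1 f \<approx> gact (z1 - z2) f + gact z2 f"
    using gact_add_cur[of "z1 - z2" z2 f] assms by simp
  then have "gact z1 f - gact z2 f \<approx> gact (z1 - z2) f"
    using cong_diff[of _ _ "gact z2 f" "gact z2 f"] by fastforce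
  then show ?thesis
    by (rule cong_sym)
qed

lemma gact_uminus_cur:
  assumes "valid n z" "f \<in> Unm"
  shows "gact (- z) f \<approx> - gact z f"
proof -
  have "gact (0 - z) f \<approx> gact 0 f - gact z f"
    using assms by (intro gact_diff_cur) simp_all
  also have "\<dots> \<approx> 0 - gact z f"
    using assms(2) by (intro cong_diff gact_zero_cur cong_refl)
  finally show ?thesis
    by simp
qed

lemma gact_nm_elt: "nm_elt x \<Longrightarrow> f \<in> Unm \<Longrightarrow> gact x f \<approx> lmul x f"
  using bact_zero_cur[of f]
  by (simp add: gact_def cong_Knm_def nm_elt_def lower_nminus upper_nminus)

lemma gact_bp_elt: "bp_elt b \<Longrightarrow> f \<in> Unm \<Longrightarrow> gact b f \<approx> bact b f"
  using lmul_zero_cur[of f]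
  by (simp add: gact_def cong_Knm_def bp_elt_def lower_bplus upper_bplus)

lemma gact_lmul_commute:
  assumes z: "valid n z" and y: "nm_elt y" and f: "f \<in> Unm"
  shows "gact z (lmul y f) \<approx> lmul y (gact z f) + gact (br z y) f"
proof -
  have yv: "valid n y"
    using y by (simp add: nm_elt_valid)
  have "gact z (lmul y f) = lmul (lower z) (lmul y f) + (lmul y (bact (upper z) f) + gact (br (upper z) y) f)"
    using f by (simp add: gact_def bact_lmul fin_supp_Unm)
  also have "\<dots> \<approx> (lmul y (lmul (lower z) f) + lmul (br (lower z) y) f)
      + (lmul y (bact (upper z) f) + gact (br (upper z) y) f)"
    using lmul_commutator[of "lower z" y f] z y f
    by (intro cong_add cong_refl) (simp add: cong_Knm_def diff_diff_eq)
  also have "\<dots> \<approx> (lmul y (lmul (lower z) f) + gact (br (lower z) y) f)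
      + (lmul y (bact (upper z) f) + gact (br (upper z) y) f)"
    using z y f by (intro cong_add cong_refl cong_sym[OF gact_nm_elt]) (simp_all add: nm_elt_bracket)
  also have "\<dots> = lmul y (gact z f) + (gact (br (lower z) y) f + gact (br (upper z) y) f)"
    by (simp add: gact_def lmul_add algebra_simps)
  also have "\<dots> \<approx> lmul y (gact z f) + gact (br (lower z) y + br (upper z) y) f"
    using z yv f by (intro cong_add cong_refl cong_sym[OF gact_add_cur]) simp_all
  also have "br (lower z) y + br (upper z) y = br z y"
    using lower_plus_upper[of z] bracket_add_left[of n "lower z" "upper z" y] by simp
  finally show ?thesis .
qed

primrec lmul_word :: "cur list \<Rightarrow> fa \<Rightarrow> fa" where
  "lmul_word [] f = f"
| "lmul_word (x # u) f = lmul x (lmul_word u f)"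

lemma lmul_word_fa_word: "lmul_word u (fa_word w) = fa_word (u @ w)"
  and lmul_word_diff: "lmul_word u (f - g) = lmul_word u f - lmul_word u g"
  and lmul_word_smult: "lmul_word u (fa_smult c f) = fa_smult c (lmul_word u f)"
  by (induction u) (simp_all add: lmul_diff lmul_smult)

lemma lmul_word_in_Knm: "u \<in> nm_words \<Longrightarrow> f \<in> Knm \<Longrightarrow> lmul_word u f \<in> Knm"
  by (induction u) (simp_all add: lmul_in_Knm)

lemma bact_lmul_word_in_Knm:
  assumes "u \<in> nm_words" "g \<in> Knm" "\<And>b. valid n b \<Longrightarrow> bact b g \<in> Knm" "valid n b"
  shows "bact b (lmul_word u g) \<in> Knm"
  using assms(1,4)
proof (induction u arbitrary: b)
  case Nil
  then show ?case using assms(3) by simp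
next
  case (Cons x u)
  let ?g = "lmul_word u g"
  have x: "nm_elt x" "valid n x" and u: "u \<in> nm_words"
    using Cons.prems by (auto simp: nm_elt_valid)
  have g: "?g \<in> Knm"
    using lmul_word_in_Knm[OF u assms(2)] .
  have "bact b (lmul_word (x # u) g)
      = lmul x (bact b ?g) + (lmul (lower (br b x)) ?g + bact (upper (br b x)) ?g)"
    using fin_supp_Knm[OF g] by (simp add: bact_lmul gact_def)
  also have "\<dots> \<in> Knm"
    using Cons.prems x u g by (intro fa.span_add lmul_in_Knm Cons.IH) simp_all
  finally show ?case .
qed

lemma gact_diff_cur_Knm:
  assumes "valid n z1" "valid n z2" "z3 = z1 - z2" "f \<in> Unm"
  shows "gact z1 f - gact z2 f - gact z3 f \<in> Knm"
  using cong_sym[OF gact_diff_cur[OF assms(1,2,4)]] assms(3) by (simp add: cong_Knm_def)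

lemma bact_Knm_additive:
  assumes "w \<in> nm_words" "nm_elt x" "nm_elt y" "valid n b"
  shows "bact b (fa_word ((x + y) # w) - fa_word (x # w) - fa_word (y # w)) \<in> Knm"
proof -
  let ?W = "fa_word w" and ?RW = "bact b (fa_word w)"
  have W: "?W \<in> Unm" and RW: "?RW \<in> Unm"
    using assms by (simp_all add: word_in_Unm bact_in_Unm)
  have "bact b (fa_word ((x + y) # w) - fa_word (x # w) - fa_word (y # w))
      = (lmul (x + y) ?RW + gact (br b (x + y)) ?W) - (lmul x ?RW + gact (br b x) ?W)
        - (lmul y ?RW + gact (br b y) ?W)"
    by (simp add: bact_diff bact_lmul flip: lmul_word)
  also have "\<dots> = (lmul (x + y) ?RW - lmul x ?RW - lmul y ?RW)
        + (gact (br b (x + y)) ?W - gact (br b x) ?W - gact (br b y) ?W)"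
    by (simp add: algebra_simps)
  also have "\<dots> \<in> Knm"
    using gact_add_cur[of "br b x" "br b y" ?W] assms W RW
    by (intro fa.span_add lmul_add_cur)
      (simp_all add: bracket_add_right nm_elt_valid cong_Knm_def diff_diff_eq)
  finally show ?thesis .
qed

lemma bact_Knm_homogeneous:
  assumes "w \<in> nm_words" "nm_elt x" "valid n b"
  shows "bact b (fa_word (cur_smult c x # w) - fa_smult c (fa_word (x # w))) \<in> Knm"
proof -
  let ?W = "fa_word w" and ?RW = "bact b (fa_word w)"
  have W: "?W \<in> Unm" and RW: "?RW \<in> Unm"
    using assms by (simp_all add: word_in_Unm bact_in_Unm)
  have "bact b (fa_word (cur_smult c x # w) - fa_smult c (fa_word (x # w)))
      = (lmul (cur_smult c x) ?RW + gact (br b (cur_smult c x)) ?W)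
        - fa_smult c (lmul x ?RW + gact (br b x) ?W)"
    by (simp add: bact_diff bact_lmul bact_smult flip: lmul_word)
  also have "\<dots> = (lmul (cur_smult c x) ?RW - fa_smult c (lmul x ?RW))
        + (gact (br b (cur_smult c x)) ?W - fa_smult c (gact (br b x) ?W))"
    by (simp add: fa.scale_right_distrib algebra_simps)
  also have "\<dots> \<in> Knm"
    using gact_smult_cur[of "br b x" ?W c] assms W RW
    by (intro fa.span_add lmul_smult_cur)
      (simp_all add: bracket_cur_smult_right nm_elt_valid cong_Knm_def)
  finally show ?thesis .
qed

lemma bracket_jacobi_right: "br b (br x y) = br (br b x) y - br (br b y) x"
  using bracket_jacobi[of n b x y] bracket_antisym[of n x "br b y"] by simp

lemma bact_lmul_lmul:
  assumes "valid n b" "nm_elt x" "nm_elt y" "f \<in> Unm"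
  shows "bact b (lmul x (lmul y f)) \<approx>
    lmul x (lmul y (bact b f)) + lmul x (gact (br b y) f) + lmul y (gact (br b x) f)
    + gact (br (br b x) y) f"
proof -
  have "bact b (lmul x (lmul y f)) = lmul x (lmul y (bact b f) + gact (br b y) f) + gact (br b x) (lmul y f)"
    using assms(4) by (simp add: bact_lmul)
  also have "\<dots> \<approx> lmul x (lmul y (bact b f) + gact (br b y) f) + (lmul y (gact (br b x) f) + gact (br (br b x) y) f)"
    using assms by (intro cong_add cong_refl gact_lmul_commute) (simp_all add: nm_elt_valid)
  finally show ?thesis
    by (simp add: lmul_add algebra_simps)
qed

lemma bact_Knm_commutator:
  assumes "w \<in> nm_words" "nm_elt x" "nm_elt y" "valid n b"
  shows "bact b (fa_word (x # y # w) - fa_word (y # x # w) - fa_word (br x y # w)) \<in> Knm"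
proof -
  let ?W = "fa_word w" and ?RW = "bact b (fa_word w)"
  have W: "?W \<in> Unm" and RW: "?RW \<in> Unm"
    using assms by (simp_all add: word_in_Unm bact_in_Unm)
  have "bact b (fa_word (x # y # w) - fa_word (y # x # w) - fa_word (br x y # w))
     = bact b (lmul x (lmul y ?W)) - bact b (lmul y (lmul x ?W)) - (lmul (br x y) ?RW + gact (br b (br x y)) ?W)"
    by (simp add: bact_diff bact_lmul flip: lmul_word)
  also have "\<dots> \<approx> (lmul x (lmul y ?RW) + lmul x (gact (br b y) ?W) + lmul y (gact (br b x) ?W)
        + gact (br (br b x) y) ?W)
      - (lmul y (lmul x ?RW) + lmul y (gact (br b x) ?W) + lmul x (gact (br b y) ?W)
        + gact (br (br b y) x) ?W)
      - (lmul (br x y) ?RW + gact (br b (br x y)) ?W)"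
    using assms W by (intro cong_diff cong_refl bact_lmul_lmul)
  also have "\<dots> = (lmul x (lmul y ?RW) - lmul y (lmul x ?RW) - lmul (br x y) ?RW)
      + (gact (br (br b x) y) ?W - gact (br (br b y) x) ?W - gact (br b (br x y)) ?W)"
    by (simp add: algebra_simps)
  also have "\<dots> \<approx> 0"
    unfolding Knm_iff_cong_zero[symmetric] using assms W RW
    by (intro fa.span_add lmul_commutator gact_diff_cur_Knm)
      (simp_all add: nm_elt_valid bracket_jacobi_right)
  finally show ?thesis
    by (simp add: Knm_iff_cong_zero)
qed

lemma bact_gen_in_Knm:
  assumes b: "valid n b" and g: "g \<in> nm_rel_gens"
  shows "bact b g \<in> Knm"
  using g
proof (cases rule: nm_rel_gensE)
  case (additive u x y w)
  then have "g = lmul_word u (fa_word ((x + y) # w) - fa_word (x # w) - fa_word (y # w))"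
    by (simp add: lmul_word_diff lmul_word_fa_word)
  moreover have "bact b \<dots> \<in> Knm"
    using additive Knm_additive[of "[]" w x y]
    by (intro bact_lmul_word_in_Knm b bact_Knm_additive) simp_all
  ultimately show ?thesis by simp
next
  case (homogeneous u c x w)
  then have "g = lmul_word u (fa_word (cur_smult c x # w) - fa_smult c (fa_word (x # w)))"
    by (simp add: lmul_word_diff lmul_word_smult lmul_word_fa_word)
  moreover have "bact b \<dots> \<in> Knm"
    using homogeneous Knm_homogeneous[of "[]" w x c]
    by (intro bact_lmul_word_in_Knm b bact_Knm_homogeneous) simp_all
  ultimately show ?thesis by simp
next
  case (commutator u x y w)
  then have "g = lmul_word u (fa_word (x # y # w) - fa_word (y # x # w) - fa_word (br x y # w))"
    by (simp add: lmul_word_diff lmul_word_fa_word)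
  moreover have "bact b \<dots> \<in> Knm"
    using commutator Knm_commutator[of "[]" w x y]
    by (intro bact_lmul_word_in_Knm b bact_Knm_commutator) simp_all
  ultimately show ?thesis by simp
qed

lemma bact_in_Knm: "valid n b \<Longrightarrow> f \<in> Knm \<Longrightarrow> bact b f \<in> Knm"
  by (rule fs_linear_in_subspace[OF _ fs_linear_bact fa.subspace_span])
    (auto intro: fin_supp_Knm fa.span_base bact_gen_in_Knm)

lemma gact_in_Knm: "valid n z \<Longrightarrow> f \<in> Knm \<Longrightarrow> gact z f \<in> Knm"
  unfolding gact_def by (intro fa.span_add lmul_in_Knm bact_in_Knm) simp_all

lemma cong_bact: "valid n b \<Longrightarrow> f \<approx> g \<Longrightarrow> fin_supp f \<Longrightarrow> fin_supp g \<Longrightarrow> bact b f \<approx> bact b g"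
  unfolding cong_Knm_def by (simp add: bact_in_Knm flip: bact_diff)

lemma bracket_jacobi_left: "br (br b b') x = br (br b x) b' - br (br b' x) b"
  using bracket_jacobi[of n b b' x] bracket_antisym[of n b "br b' x"]
    bracket_antisym[of n b' "br b x"]
  by (simp add: algebra_simps)

text \<open>The commutation of \<open>gact z\<close> past \<open>bact b'\<close> on \<open>g\<close> only needs the commutator relation for
  operators \<open>bact\<close> on \<open>g\<close>; this allows the induction on words in \<open>bact_commutator_word\<close>.\<close>

lemma gact_bact_commute:
  assumes z: "valid n z" and b': "bp_elt b'" and g: "g \<in> Unm"
    and bact_comm: "\<And>c c'. bp_elt c \<Longrightarrow> bp_elt c' \<Longrightarrow>
      bact c (bact c' g) - bact c' (bact c g) - bact (br c c') g \<in> Knm"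
  shows "gact z (bact b' g) - bact b' (gact z g) \<approx> gact (br z b') g"
proof -
  have bv: "valid n b'"
    using b' by (simp add: bp_elt_valid)
  have "gact z (bact b' g) - bact b' (gact z g)
      = (bact (upper z) (bact b' g) - bact b' (bact (upper z) g)) - gact (br b' (lower z)) g"
    using g by (simp add: gact_def bact_add bact_lmul algebra_simps)
  also have "\<dots> \<approx> bact (br (upper z) b') g - gact (br b' (lower z)) g"
    using bact_comm[of "upper z" b'] z b'
    by (intro cong_diff cong_refl) (simp add: cong_Knm_def diff_diff_eq)
  also have "\<dots> \<approx> gact (br (upper z) b') g - gact (- br (lower z) b') g"
    using z b' g
    by (intro cong_diff cong_sym[OF gact_bp_elt])
      (simp_all add: bp_elt_def in_bplus_bracket flip: bracket_antisym)
  also have "\<dots> \<approx> gact (br (upper z) b') g - - gact (br (lower z) b') g"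
    using z bv g by (intro cong_diff cong_refl gact_uminus_cur) simp_all
  also have "\<dots> \<approx> gact (br (upper z) b' + br (lower z) b') g"
    using z bv g by (simp add: cong_sym gact_add_cur)
  also have "br (upper z) b' + br (lower z) b' = br z b'"
    using lower_plus_upper[of z] bracket_add_left[of n "lower z" "upper z" b'] by (simp add: add.commute)
  finally show ?thesis .
qed

lemma bact_commutator_word:
  "w \<in> nm_words \<Longrightarrow> bp_elt b \<Longrightarrow> bp_elt b' \<Longrightarrow>
    bact b (bact b' (fa_word w)) - bact b' (bact b (fa_word w)) - bact (br b b') (fa_word w) \<in> Knm"
proof (induction w arbitrary: b b')
  case Nil
  show ?case
    using fa.span_zero by (simp only: bact_fa_word bact_word.simps bact_zero diff_self)
next
  case (Cons x w)
  let ?g = "fa_word w"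
  have x: "nm_elt x" "valid n x" and w: "w \<in> nm_words" and g: "?g \<in> Unm"
    and b: "valid n b" "valid n b'"
    using Cons.prems by (simp_all add: nm_elt_valid bp_elt_valid word_in_Unm)
  have IH: "\<And>c c'. bp_elt c \<Longrightarrow> bp_elt c' \<Longrightarrow>
      bact c (bact c' ?g) - bact c' (bact c ?g) - bact (br c c') ?g \<in> Knm"
    using Cons.IH[OF w] .
  have twice: "bact c (bact c' (lmul x ?g))
      = lmul x (bact c (bact c' ?g)) + gact (br c x) (bact c' ?g) + bact c (gact (br c' x) ?g)" for c c'
  proof -
    have "bact c' (lmul x ?g) = lmul x (bact c' ?g) + gact (br c' x) ?g"
      by (rule bact_lmul) simp
    then show ?thesis
      by (simp add: bact_add bact_lmul)
  qed
  have "bact b (bact b' (lmul x ?g)) - bact b' (bact b (lmul x ?g)) - bact (br b b') (lmul x ?g)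
     = lmul x (bact b (bact b' ?g) - bact b' (bact b ?g) - bact (br b b') ?g)
       + (gact (br b x) (bact b' ?g) - bact b' (gact (br b x) ?g))
       - (gact (br b' x) (bact b ?g) - bact b (gact (br b' x) ?g))
       - gact (br (br b b') x) ?g"
    unfolding twice bact_lmul[OF fin_supp_word, of "br b b'"]
    by (simp add: lmul_diff lmul_add algebra_simps)
  also have "\<dots> \<approx> 0 + gact (br (br b x) b') ?g - gact (br (br b' x) b) ?g - gact (br (br b b') x) ?g"
    using Cons.prems b x g IH
    by (intro cong_diff cong_add cong_refl gact_bact_commute)
      (simp_all add: lmul_in_Knm flip: Knm_iff_cong_zero)
  also have "\<dots> \<approx> 0"
    using gact_diff_cur_Knm[OF _ _ bracket_jacobi_left g] b x by (simp add: cong_Knm_def)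
  finally show ?case
    by (simp only: cong_Knm_def lmul_word diff_zero)
qed

lemma bact_commutator:
  assumes "bp_elt b" "bp_elt b'" "f \<in> Unm"
  shows "bact b (bact b' f) - bact b' (bact b f) - bact (br b b') f \<in> Knm"
proof -
  have "fs_linear (\<lambda>f. bact b (bact b' f) - bact b' (bact b f) - bact (br b b') f)"
    by (intro fs_linear_minus fs_linear_comp[OF fs_linear_bact fs_linear_bact] fs_linear_bact)
  then show ?thesis
    by (rule fs_linear_in_subspace[OF assms(3) _ fa.subspace_span])
      (auto intro: bact_commutator_word assms)
qed

lemma gact_commutator:
  assumes x: "valid n x" and y: "valid n y" and f: "f \<in> Unm"
  shows "gact x (gact y f) - gact y (gact x f) \<approx> gact (br x y) f"
proof -
  have "gact x (gact y f) - gact y (gact x f)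
      = (gact x (lmul (lower y) f) - lmul (lower y) (gact x f))
        + (gact x (bact (upper y) f) - bact (upper y) (gact x f))"
    unfolding gact_def[of y] using f by (simp add: gact_add algebra_simps)
  also have "\<dots> \<approx> gact (br x (lower y)) f + gact (br x (upper y)) f"
    using gact_lmul_commute[of x "lower y" f] x y f
    by (intro cong_add gact_bact_commute bact_commutator)
      (simp_all add: cong_Knm_def algebra_simps)
  also have "\<dots> \<approx> gact (br x y) f"
    using x y f gact_add_cur[of "br x (lower y)" "br x (upper y)" f]
    by (simp add: cong_sym flip: bracket_add_right lower_plus_upper)
  finally show ?thesis .
qed

text \<open>Letters outside \<open>\<^bold>s\<^bold>l\<^sub>n[t]\<close> act by zero, in accordance with the first family of
  relations in \<^const>\<open>rels\<close>.\<close>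

definition gen_act :: "cur \<Rightarrow> fa \<Rightarrow> fa" where
  "gen_act y f = (if valid n y then gact y f else 0)"

primrec word_act :: "cur list \<Rightarrow> fa \<Rightarrow> fa" where
  "word_act [] f = f"
| "word_act (y # u) f = gen_act y (word_act u f)"

definition fa_act :: "fa \<Rightarrow> fa \<Rightarrow> fa" where
  "fa_act g v = word_ext (\<lambda>u. word_act u v) g"

definition vac :: fa where
  "vac = fa_word []"

lemma fs_linear_word_act: "fs_linear (word_act u)"
proof (induction u)
  case Nil
  then show ?case by (simp add: fs_linear_ident)
next
  case (Cons y u)
  have "fs_linear (gen_act y)"
    unfolding gen_act_def fs_linear_def by (simp add: fs_linearD[OF fs_linear_gact])
  then show ?case
    using fs_linear_comp[OF _ Cons.IH] by simp
qed

lemma word_act_in_Unm: "f \<in> Unm \<Longrightarrow> word_act u f \<in> Unm"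
  by (induction u) (simp_all add: gen_act_def gact_in_Unm fa.span_zero)

lemma word_act_in_Knm: "f \<in> Knm \<Longrightarrow> word_act u f \<in> Knm"
  by (induction u) (simp_all add: gen_act_def gact_in_Knm fa.span_zero)

lemma word_act_append: "word_act (u @ w) v = word_act u (word_act w v)"
  by (induction u) simp_all

lemma fs_linear_fa_act: "fin_supp v \<Longrightarrow> fs_linear (\<lambda>g. fa_act g v)"
  unfolding fa_act_def by (rule fs_linear_word_ext) (simp add: fs_linear_fin_supp[OF fs_linear_word_act])

lemma fa_act_word [simp]: "fa_act (fa_word u) v = word_act u v"
  by (simp add: fa_act_def)

lemma fa_act_in_Knm:
  assumes "fin_supp g" "v \<in> Knm"
  shows "fa_act g v \<in> Knm"
proof -
  have "fa_act g v = (\<Sum>w\<in>{w. g w \<noteq> 0}. fa_smult (g w) (word_act w v))"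
    by (simp add: fa_act_def word_ext_def)
  also have "\<dots> \<in> Knm"
    using assms(2) by (intro fa.span_sum fa.span_scale word_act_in_Knm)
  finally show ?thesis .
qed

lemma fa_act_mul:
  assumes "fin_supp a" "fin_supp g" "fin_supp v"
  shows "fa_act (fa_mul a g) v = fa_act a (fa_act g v)"
proof -
  have lin: "fs_linear (\<lambda>g. fa_act g v)"
    using assms(3) by (rule fs_linear_fa_act)
  have words: "fa_act (fa_mul (fa_word u) g) v = word_act u (fa_act g v)" for u
    by (rule fs_linear_eqI[OF fs_linear_comp[OF lin fs_linear_mul_right]
          fs_linear_comp[OF fs_linear_word_act lin] _ assms(2)])
      (simp_all add: word_act_append)
  show ?thesis
    by (rule fs_linear_eqI[OF fs_linear_comp[OF lin fs_linear_mul_left]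
          fs_linear_fa_act[OF fs_linear_fin_supp[OF lin]] _ assms(1)]) (simp_all add: assms words)
qed

lemma fa_act_rels:
  assumes "\<rho> \<in> rels n" "v \<in> Unm"
  shows "fa_act \<rho> v \<in> Knm"
proof -
  have lin: "fs_linear (\<lambda>g. fa_act g v)"
    using assms(2) by (simp add: fs_linear_fa_act)
  show ?thesis
    using assms(1) unfolding rels_eq
  proof (elim UnE CollectE exE conjE)
    fix x assume "\<rho> = fa_word [x]" "\<not> valid n x"
    then show ?thesis by (simp add: gen_act_def fa.span_zero)
  next
    fix x y assume "\<rho> = fa_word [x + y] - fa_word [x] - fa_word [y]" "valid n x" "valid n y"
    moreover have "gact (x + y) v \<approx> gact x v + gact y v"
      using calculation(2,3) assms(2) by (rule gact_add_cur)
    ultimately show ?thesis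
      by (simp add: fs_linear_diff[OF lin] fs_linear_add[OF lin] gen_act_def cong_Knm_def diff_diff_eq)
  next
    fix c x assume "\<rho> = fa_word [cur_smult c x] - fa_smult c (fa_word [x])" "valid n x"
    moreover have "gact (cur_smult c x) v \<approx> fa_smult c (gact x v)"
      using calculation(2) assms(2) by (rule gact_smult_cur)
    ultimately show ?thesis
      by (simp add: fs_linear_diff[OF lin] fs_linear_smult[OF lin] gen_act_def cong_Knm_def)
  next
    fix x y assume "\<rho> = fa_word [x, y] - fa_word [y, x] - fa_word [br x y]" "valid n x" "valid n y"
    moreover have "gact x (gact y v) - gact y (gact x v) \<approx> gact (br x y) v"
      using calculation(2,3) assms(2) by (rule gact_commutator)
    ultimately show ?thesis
      by (simp add: fs_linear_diff[OF lin] gen_act_def cong_Knm_def)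
  qed
qed

lemma fa_act_ideal_vac: "g \<in> ideal n \<Longrightarrow> fa_act g vac \<in> Knm"
proof (unfold ideal_eq_span, erule fs_linear_in_subspace[OF _ fs_linear_fa_act fa.subspace_span])
  fix h assume "h \<in> ideal_gens n"
  then obtain a \<rho> b where h: "h = fa_mul (fa_mul a \<rho>) b" "fin_supp a" "fin_supp b" "\<rho> \<in> rels n"
    unfolding ideal_gens_def by blast
  have b_vac: "fa_act b vac \<in> Unm"
    by (simp add: fa_act_def word_ext_def vac_def fa.span_sum fa.span_scale
        word_act_in_Unm word_in_Unm)
  then have "fa_act a (fa_act \<rho> (fa_act b vac)) \<in> Knm"
    using h(2,4) by (intro fa_act_in_Knm fa_act_rels)
  then show "fa_act h vac \<in> Knm"
    using h fin_supp_Unm[OF b_vac] by (simp add: fa_act_mul fin_supp_rels vac_def)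
qed (auto simp: fin_supp_ideal_gens vac_def)

text \<open>Elements of \<open>\<^bold>b\<^sup>+[t]\<close> annihilate the empty word, so the left ideal generated by
  \<open>\<^bold>b\<^sup>+[t]\<close> acts trivially on it.\<close>

lemma fa_act_Jleft_vac: "g \<in> Jleft n \<Longrightarrow> fa_act g vac \<in> Knm"
proof (unfold Jleft_eq_span, erule fs_linear_in_subspace[OF _ fs_linear_fa_act fa.subspace_span])
  fix h assume "h \<in> Jleft_gens n \<union> ideal_gens n"
  then show "fa_act h vac \<in> Knm"
  proof
    assume "h \<in> Jleft_gens n"
    then obtain a y where h: "h = fa_mul a (fa_word [y])" "fin_supp a" "bp_elt y"
      unfolding Jleft_gens_def bp_elt_def by blast
    have "gen_act y vac = fa_word [0]"
      using h(3) by (simp add: gen_act_def gact_def bp_elt_def lower_bplus vac_def bact_fa_word)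
    then have "fa_act a (gen_act y vac) \<in> Knm"
      using h(2) Knm_zero_letter[of "[]" "[]"] by (intro fa_act_in_Knm) simp_all
    then show ?thesis
      using h by (simp add: fa_act_mul vac_def)
  next
    assume "h \<in> ideal_gens n"
    then show ?thesis
      by (intro fa_act_ideal_vac) (simp add: ideal_eq_span fa.span_base)
  qed
qed (auto simp: fin_supp_ideal_gens fin_supp_Jleft_gens vac_def)

lemma fa_act_Unm_vac: "v \<in> Unm \<Longrightarrow> fa_act v vac \<approx> v"
proof -
  have word: "word_act w vac \<approx> fa_word w" if "w \<in> nm_words" for w
    using that
  proof (induction w)
    case Nil
    then show ?case by (simp add: vac_def)
  next
    case (Cons x w)
    have x: "nm_elt x" "valid n x" and w: "w \<in> nm_words"
      using Cons.prems by (auto simp: nm_elt_valid)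
    have "word_act (x # w) vac = gact x (word_act w vac)"
      by (simp add: gen_act_def x)
    also have "\<dots> \<approx> gact x (fa_word w)"
      using Cons.IH[OF w] word_act_in_Unm[of vac w] w
      by (simp add: cong_Knm_def gact_in_Knm x vac_def word_in_Unm flip: gact_diff)
    also have "\<dots> \<approx> lmul x (fa_word w)"
      using gact_nm_elt[OF x(1) word_in_Unm[OF w]] .
    finally show ?case by simp
  qed
  assume "v \<in> Unm"
  then have "fa_act v vac - v \<in> Knm"
    by (rule fs_linear_in_subspace[OF _ fs_linear_minus[OF fs_linear_fa_act fs_linear_ident]
          fa.subspace_span]) (auto simp: vac_def cong_Knm_def dest: word)
  then show ?thesis
    by (simp add: cong_Knm_def)
qed

text \<open>This is \<open>U(\<^bold>n\<^sup>-[t]) \<inter> U(\<^bold>g[t]) \<^bold>b\<^sup>+[t] = 0\<close>, which makes \<open>pr\<close> well defined modulo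
  the defining ideal.\<close>

lemma Unm_Jleft_in_Knm:
  assumes "v \<in> Unm" "v \<in> Jleft n"
  shows "v \<in> Knm"
proof -
  have "fa_act v vac \<in> Knm"
    using assms(2) by (rule fa_act_Jleft_vac)
  moreover have "fa_act v vac \<approx> v"
    using assms(1) by (rule fa_act_Unm_vac)
  ultimately show ?thesis
    unfolding cong_Knm_def using fa.span_diff by fastforce
qed

lemma Knm_subset_ideal: "f \<in> Knm \<Longrightarrow> f \<in> ideal n"
proof -
  have "nm_rel_gens \<subseteq> ideal n"
    by (auto elim!: nm_rel_gensE intro: ideal_additive ideal_homogeneous ideal_commutator nm_elt_valid)
  moreover have "fa.subspace (ideal n)"
    by (simp add: ideal_eq_span)
  ultimately show "f \<in> Knm \<Longrightarrow> f \<in> ideal n"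
    using fa.span_minimal by blast
qed

text \<open>Modulo \<open>U(\<^bold>g[t]) \<^bold>b\<^sup>+[t]\<close>, moving \<open>b\<close> to the right end of \<open>b w\<close> letter by letter
  produces exactly the terms of \<^const>\<open>bact_word\<close>.\<close>

lemma bp_word_minus_bact_in_Jleft:
  "w \<in> nm_words \<Longrightarrow> bp_elt b \<Longrightarrow> fa_word (b # w) - bact_word w b \<in> Jleft n"
proof (induction w arbitrary: b)
  case Nil
  then show ?case
    using Jleft_gen_in_Jleft[of "fa_word []" n b] by (simp add: bp_elt_def flip: zero_fun_def)
next
  case (Cons x w)
  let ?z = "br b x"
  have x: "nm_elt x" "valid n x" and w: "w \<in> nm_words" and b: "valid n b"
    using Cons.prems by (auto simp: nm_elt_valid bp_elt_valid)
  have "fa_word (b # x # w) - bact_word (x # w) b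
     = (fa_word (b # x # w) - fa_word (x # b # w) - fa_word (?z # w))
       + lmul x (fa_word (b # w) - bact_word w b)
       + (fa_word ((lower ?z + upper ?z) # w) - fa_word (lower ?z # w) - fa_word (upper ?z # w))
       + (fa_word (upper ?z # w) - bact_word w (upper ?z))"
    by (simp add: lmul_diff algebra_simps flip: lower_plus_upper)
  also have "\<dots> \<in> Jleft n"
    using ideal_commutator[OF b x(2), of "[]" w] ideal_additive[of n "lower ?z" "upper ?z" "[]" w]
      Cons.prems b x w
    by (intro fa.subspace_add[OF subspace_Jleft] ideal_subset_Jleft lmul_Jleft Cons.IH) simp_all
  finally show ?case .
qed

lemma lmul_minus_bact_in_Jleft:
  assumes "bp_elt b" "f \<in> Unm"
  shows "lmul b f - bact b f \<in> Jleft n"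
  by (rule fs_linear_in_subspace[OF assms(2) fs_linear_minus[OF fs_linear_lmul fs_linear_bact]
        subspace_Jleft]) (auto simp: bact_fa_word intro: bp_word_minus_bact_in_Jleft[OF _ assms(1)])

primrec bact_list :: "cur list \<Rightarrow> fa \<Rightarrow> fa" where
  "bact_list [] f = f"
| "bact_list (b # bs) f = bact b (bact_list bs f)"

lemma bact_list_in_Unm: "(\<And>b. b \<in> set bs \<Longrightarrow> bp_elt b) \<Longrightarrow> f \<in> Unm \<Longrightarrow> bact_list bs f \<in> Unm"
  by (induction bs) (simp_all add: bact_in_Unm bp_elt_valid)

lemma word_minus_bact_list_in_Jleft:
  assumes "\<And>b. b \<in> set bs \<Longrightarrow> bp_elt b" "ws \<in> nm_words"
  shows "fa_word (bs @ ws) - bact_list bs (fa_word ws) \<in> Jleft n"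
  using assms(1)
proof (induction bs)
  case Nil
  then show ?case
    using fa.subspace_0[OF subspace_Jleft] by (simp flip: zero_fun_def)
next
  case (Cons b bs)
  let ?f = "bact_list bs (fa_word ws)"
  have "?f \<in> Unm"
    using Cons.prems assms(2) by (intro bact_list_in_Unm word_in_Unm) auto
  moreover have "fa_word (bs @ ws) - ?f \<in> Jleft n"
    by (rule Cons.IH) (use Cons.prems in auto)
  ultimately have "lmul b (fa_word (bs @ ws) - ?f) + (lmul b ?f - bact b ?f) \<in> Jleft n"
    using Cons.prems by (intro fa.subspace_add[OF subspace_Jleft] lmul_Jleft lmul_minus_bact_in_Jleft) simp_all
  moreover have "fa_word ((b # bs) @ ws) - bact_list (b # bs) (fa_word ws)
      = lmul b (fa_word (bs @ ws) - ?f) + (lmul b ?f - bact b ?f)"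
    by (simp add: lmul_diff)
  ultimately show ?case
    by (simp only:)
qed

lemma pr_rel_bact_list:
  assumes "\<And>b. b \<in> set bs \<Longrightarrow> bp_elt b" "ws \<in> nm_words"
  shows "pr_rel n (fa_word (bs @ ws)) (bact_list bs (fa_word ws))"
  using assms bact_list_in_Unm[OF assms(1) word_in_Unm[OF assms(2)]] word_minus_bact_list_in_Jleft
  by (simp add: pr_rel_def Nminus_eq_Unm fa_diff_eq_minus)

lemma pr_rel_unique:
  assumes "pr_rel n u v1" "pr_rel n u v2"
  shows "v1 - v2 \<in> ideal n"
proof -
  have "v1 \<in> Unm" "v2 \<in> Unm" "u - v1 \<in> Jleft n" "u - v2 \<in> Jleft n"
    using assms by (simp_all add: pr_rel_def Nminus_eq_Unm fa_diff_eq_minus)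
  moreover have "(u - v2) - (u - v1) = v1 - v2"
    by simp
  ultimately have "v1 - v2 \<in> Unm" "v1 - v2 \<in> Jleft n"
    by (metis fa.span_diff, metis fa.subspace_diff[OF subspace_Jleft])
  then show ?thesis
    by (simp add: Unm_Jleft_in_Knm Knm_subset_ideal)
qed

end

section \<open>Straightening \<open>\<^bold>x\<^sup>+\<^sub>i\<^sub>,\<^sub>r(\<ell>\<^sup>+, \<^bold>s\<^sup>+) \<^bold>x\<^sup>-\<^sub>i\<^sub>,\<^sub>r(\<ell>, \<^bold>s)\<close>\<close>

locale sl_current_root = sl_current +
  fixes i r :: nat
  assumes n_eq: "n = Suc r" and i_ge_1: "1 \<le> i" and i_le_r: "i \<le> r"
begin

abbreviation xp :: "nat \<Rightarrow> cur" where
  "xp \<equiv> xplus i r"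

abbreviation xm :: "nat \<Rightarrow> cur" where
  "xm \<equiv> xminus i r"

definition hcur :: "nat \<Rightarrow> cur" where
  "hcur p = ecur i i p - ecur (Suc r) (Suc r) p"

lemma xp_eq_ecur: "xp k = ecur i (Suc r) k"
  and xm_eq_ecur: "xm k = ecur (Suc r) i k"
  by (simp_all add: xplus_def xminus_def ecur_def)

lemma root_indices: "i \<in> {1..n}" "Suc r \<in> {1..n}" "i \<noteq> Suc r"
  using n_eq i_ge_1 i_le_r by auto

lemma bp_elt_xp: "bp_elt (xp k)"
  and nm_elt_xm: "nm_elt (xm k)"
  and bp_elt_hcur: "bp_elt (hcur p)"
  using valid_ecur[of i n "Suc r" k] valid_ecur[of "Suc r" n i k]
    valid_ecur_diag_diff[of i n "Suc r" p] root_indices i_le_r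
  by (auto simp: bp_elt_def nm_elt_def in_bplus_def in_nminus_def xp_eq_ecur xm_eq_ecur hcur_def
      ecur_def)

lemma map_xm_nm_words: "map xm m \<in> nm_words"
  by (simp add: nm_words_def nm_elt_xm)

lemma br_xp_xm: "br (xp k) (xm j) = hcur (k + j)"
  unfolding xp_eq_ecur xm_eq_ecur hcur_def using root_indices by (simp add: bracket_ecur)

lemma br_hcur_xm: "br (hcur p) (xm j) = cur_smult (-2) (xm (p + j))"
proof -
  have "br (hcur p) (xm j)
      = br (ecur i i p) (ecur (Suc r) i j) - br (ecur (Suc r) (Suc r) p) (ecur (Suc r) i j)"
    unfolding hcur_def xm_eq_ecur by (rule bracket_diff_left)
  also have "\<dots> = - ecur (Suc r) i (p + j) - ecur (Suc r) i (p + j)"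
    using root_indices by (simp add: bracket_ecur)
  also have "\<dots> = cur_smult (-2) (xm (p + j))"
    unfolding xm_eq_ecur by (simp add: fun_eq_iff cur_smult_def)
  finally show ?thesis .
qed

lemma br_xm_xm: "br (xm a) (xm b) = 0"
  unfolding xm_eq_ecur using root_indices by (simp add: bracket_ecur)

lemma xm_word_swap: "fa_word (map xm (u @ a # b # w)) \<approx> fa_word (map xm (u @ b # a # w))"
proof -
  let ?z = "fa_word (map xm u @ br (xm a) (xm b) # map xm w)"
  have "(fa_word (map xm u @ xm a # xm b # map xm w) - fa_word (map xm u @ xm b # xm a # map xm w)
      - ?z) + ?z \<in> Knm"
    using Knm_zero_letter[of "map xm u" "map xm w"]
    by (intro fa.span_add Knm_commutator) (simp_all add: map_xm_nm_words nm_elt_xm br_xm_xm)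
  then show ?thesis
    by (simp add: cong_Knm_def)
qed

lemma xm_word_insort: "fa_word (map xm (u @ j # l)) \<approx> fa_word (map xm (u @ insort j l))"
proof (induction l arbitrary: u)
  case Nil
  then show ?case by simp
next
  case (Cons a l)
  show ?case
  proof (cases "j \<le> a")
    case True
    then show ?thesis by simp
  next
    case False
    have "fa_word (map xm (u @ j # a # l)) \<approx> fa_word (map xm ((u @ [a]) @ j # l))"
      using xm_word_swap by simp
    also have "\<dots> \<approx> fa_word (map xm ((u @ [a]) @ insort j l))"
      by (rule Cons.IH)
    finally show ?thesis
      using False by simp
  qed
qed

lemma xm_word_sort: "fa_word (map xm (u @ m)) \<approx> fa_word (map xm (u @ sort m))"
proof (induction m arbitrary: u)
  case Nil
  then show ?case by simp
next
  case (Cons j m)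
  have "fa_word (map xm (u @ j # m)) \<approx> fa_word (map xm ((u @ [j]) @ sort m))"
    using Cons.IH[of "u @ [j]"] by simp
  also have "\<dots> \<approx> fa_word (map xm (u @ insort j (sort m)))"
    using xm_word_insort by simp
  finally show ?case
    by simp
qed

definition xm_span :: "nat \<Rightarrow> nat \<Rightarrow> fa set" where
  "xm_span q d = fa.span {xvec_minus i r m | m. sorted m \<and> length m = q \<and> sum_list m = d}"

definition xm_span_mod :: "nat \<Rightarrow> nat \<Rightarrow> fa set" where
  "xm_span_mod q d = {f. \<exists>c\<in>xm_span q d. f \<approx> c}"

lemma subspace_xm_span_mod: "fa.subspace (xm_span_mod q d)"
  unfolding xm_span_mod_def xm_span_def by (rule subspace_cong_closure[OF fa.subspace_span])

lemma xm_span_mod_cong_closed: "f \<approx> g \<Longrightarrow> g \<in> xm_span_mod q d \<Longrightarrow> f \<in> xm_span_mod q d"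
  unfolding xm_span_mod_def using cong_trans by blast

lemma Knm_subset_xm_span_mod: "f \<in> Knm \<Longrightarrow> f \<in> xm_span_mod q d"
  unfolding xm_span_mod_def xm_span_def Knm_iff_cong_zero using fa.span_zero by blast

lemma word_in_xm_span_mod:
  assumes "length m = q" "sum_list m = d"
  shows "fa_word (map xm m) \<in> xm_span_mod q d"
proof -
  have "sum_list (sort m) = sum_list m"
    by (metis mset_sort sum_mset_sum_list)
  then have "xvec_minus i r (sort m) \<in> xm_span q d"
    unfolding xm_span_def using assms by (intro fa.span_base) auto
  moreover have "fa_word (map xm m) \<approx> xvec_minus i r (sort m)"
    using xm_word_sort[of "[]" m] by (simp add: xvec_minus_def)
  ultimately show ?thesis
    unfolding xm_span_mod_def by blast
qed

lemma lmul_xm_span_mod: "f \<in> xm_span_mod q d \<Longrightarrow> lmul (xm j) f \<in> xm_span_mod (Suc q) (d + j)"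
proof -
  assume "f \<in> xm_span_mod q d"
  then obtain c where c: "c \<in> xm_span q d" "f \<approx> c"
    unfolding xm_span_mod_def by blast
  have "lmul (xm j) c \<in> xm_span_mod (Suc q) (d + j)"
    using c(1) unfolding xm_span_def
    by (rule fs_linear_in_subspace[OF _ fs_linear_lmul subspace_xm_span_mod])
      (auto simp: xvec_minus_def word_in_xm_span_mod[of "_ # _", simplified])
  moreover have "lmul (xm j) f \<approx> lmul (xm j) c"
    using nm_elt_xm c(2) by (rule cong_lmul)
  ultimately show ?thesis
    by (rule xm_span_mod_cong_closed[rotated])
qed

lemma bact_word_hcur: "bact_word (map xm m) (hcur p) \<in> xm_span_mod (length m) (sum_list m + p)"
proof (induction m)
  case Nil
  then show ?case
    using fa.subspace_0[OF subspace_xm_span_mod] by (simp flip: zero_fun_def)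
next
  case (Cons j m)
  let ?W = "map xm m" and ?y = "cur_smult (-2) (xm (p + j))"
  have "nm_elt ?y"
    using nm_elt_xm by (rule nm_elt_cur_smult)
  then have "bact_word (map xm (j # m)) (hcur p) = lmul (xm j) (bact_word ?W (hcur p)) + fa_word (?y # ?W) + bact_word ?W 0"
    by (simp add: br_hcur_xm nm_elt_def lower_nminus upper_nminus)
  also have "\<dots> \<in> xm_span_mod (length (j # m)) (sum_list (j # m) + p)"
  proof (intro fa.subspace_add[OF subspace_xm_span_mod])
    show "lmul (xm j) (bact_word ?W (hcur p)) \<in> xm_span_mod (length (j # m)) (sum_list (j # m) + p)"
      using lmul_xm_span_mod[OF Cons.IH, of j] by (simp add: ac_simps)
    have "fa_word (?y # ?W) \<approx> fa_smult (-2) (fa_word (map xm ((p + j) # m)))"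
      using Knm_homogeneous[of "[]" ?W "xm (p + j)" "-2"] by (simp add: nm_elt_xm map_xm_nm_words cong_Knm_def)
    moreover have "fa_smult (-2) (fa_word (map xm ((p + j) # m))) \<in> xm_span_mod (length (j # m)) (sum_list (j # m) + p)"
      by (rule fa.subspace_scale[OF subspace_xm_span_mod], rule word_in_xm_span_mod) simp_all
    ultimately show "fa_word (?y # ?W) \<in> xm_span_mod (length (j # m)) (sum_list (j # m) + p)"
      by (rule xm_span_mod_cong_closed)
    show "bact_word ?W 0 \<in> xm_span_mod (length (j # m)) (sum_list (j # m) + p)"
      using bact_zero_cur[OF word_in_Unm[OF map_xm_nm_words]]
      by (simp add: bact_fa_word Knm_subset_xm_span_mod)
  qed
  finally show ?case .
qed

lemma bact_word_xp:
  "m \<noteq> [] \<Longrightarrow> bact_word (map xm m) (xp k) \<in> xm_span_mod (length m - 1) (sum_list m + k)"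
proof (induction m)
  case Nil
  then show ?case by simp
next
  case (Cons j m)
  let ?W = "map xm m"
  have "bact_word (map xm (j # m)) (xp k) = lmul (xm j) (bact_word ?W (xp k)) + fa_word (0 # ?W) + bact_word ?W (hcur (k + j))"
    using bp_elt_hcur[of "k + j"] by (simp add: br_xp_xm bp_elt_def lower_bplus upper_bplus)
  also have "\<dots> \<in> xm_span_mod (length (j # m) - 1) (sum_list (j # m) + k)"
  proof (intro fa.subspace_add[OF subspace_xm_span_mod])
    show "lmul (xm j) (bact_word ?W (xp k)) \<in> xm_span_mod (length (j # m) - 1) (sum_list (j # m) + k)"
    proof (cases "m = []")
      case True
      then show ?thesis
        using Knm_subset_xm_span_mod[OF fa.span_zero] by (simp add: lmul_zero flip: zero_fun_def)
    next
      case False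
      then show ?thesis
        using lmul_xm_span_mod[OF Cons.IH, of j] by (simp add: ac_simps)
    qed
    show "fa_word (0 # ?W) \<in> xm_span_mod (length (j # m) - 1) (sum_list (j # m) + k)"
      using Knm_zero_letter[of "[]" ?W] by (simp add: map_xm_nm_words Knm_subset_xm_span_mod)
    show "bact_word ?W (hcur (k + j)) \<in> xm_span_mod (length (j # m) - 1) (sum_list (j # m) + k)"
      using bact_word_hcur[of m "k + j"] by (simp add: ac_simps)
  qed
  finally show ?case .
qed

lemma bact_xp_xm_span:
  assumes "c \<in> xm_span q d"
  shows "bact (xp k) c \<in> (if q = 0 then Knm else xm_span_mod (q - 1) (d + k))"
proof -
  have "fa.subspace (if q = 0 then Knm else xm_span_mod (q - 1) (d + k))"
    by (simp add: subspace_xm_span_mod)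
  with assms show ?thesis
    unfolding xm_span_def
    by (elim fs_linear_in_subspace[OF _ fs_linear_bact])
      (auto simp: xvec_minus_def bact_fa_word fa.span_zero intro: bact_word_xp[simplified])
qed

lemma bact_list_xp_xm:
  "bact_list (map xp sp) (fa_word (map xm s)) \<in>
     (if length sp \<le> length s then xm_span_mod (length s - length sp) (sum_list s + sum_list sp)
      else Knm)"
proof (induction sp)
  case Nil
  then show ?case by (simp add: word_in_xm_span_mod)
next
  case (Cons k sp)
  let ?f = "bact_list (map xp sp) (fa_word (map xm s))"
  have f: "?f \<in> Unm"
    by (rule bact_list_in_Unm) (auto simp: bp_elt_xp word_in_Unm map_xm_nm_words)
  have valid_xp: "valid n (xp k)"
    using bp_elt_xp by (rule bp_elt_valid)
  show ?case
  proof (cases "length sp \<le> length s")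
    case True
    then obtain c where c: "c \<in> xm_span (length s - length sp) (sum_list s + sum_list sp)" "?f \<approx> c"
      using Cons.IH unfolding xm_span_mod_def by auto
    have "{xvec_minus i r m | m. sorted m \<and> length m = length s - length sp
        \<and> sum_list m = sum_list s + sum_list sp} \<subseteq> fa_word ` nm_words"
      by (auto simp: xvec_minus_def map_xm_nm_words)
    then have "c \<in> Unm"
      using c(1) fa.span_mono unfolding xm_span_def by blast
    then have "bact (xp k) ?f \<approx> bact (xp k) c"
      using c(2) f valid_xp by (intro cong_bact) auto
    moreover note bact_xp_xm_span[OF c(1), of k]
    ultimately show ?thesis
      using True by (auto simp: cong_Knm_def ac_simps intro: xm_span_mod_cong_closed
          dest: fa.span_add[of _ _ "bact (xp k) c"])
  next
    case False
    then show ?thesis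
      using Cons.IH valid_xp by (simp add: bact_in_Knm)
  qed
qed

lemma bact_list_xp_xm_mod_ideal:
  "\<exists>c \<in> cspan {xvec_minus i r s' | s'. sorted s' \<and> length sp \<le> length s
        \<and> length s' = length s - length sp \<and> sum_list s' = sum_list s + sum_list sp}.
     bact_list (map xp sp) (fa_word (map xm s)) - c \<in> ideal n"
proof (cases "length sp \<le> length s")
  case True
  then obtain c where "c \<in> xm_span (length s - length sp) (sum_list s + sum_list sp)"
    "bact_list (map xp sp) (fa_word (map xm s)) - c \<in> Knm"
    using bact_list_xp_xm[of sp s] by (auto simp: xm_span_mod_def cong_Knm_def)
  then show ?thesis
    using True by (auto simp: xm_span_def cspan_eq_span intro!: bexI[of _ c] Knm_subset_ideal)
next
  case False
  then show ?thesis
    using bact_list_xp_xm[of sp s] by (auto simp: cspan_eq_span Knm_subset_ideal)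
qed

end

theorem proposition3p1:
  fixes r i :: nat and sp s :: "nat list"
  assumes "1 \<le> i" and "i \<le> r"
    and "sorted sp" and "\<forall>p\<in>set sp. 0 < p"
    and "sorted s"
  shows "(\<exists>v. pr_rel (Suc r) (fa_mul (xvec_plus i r sp) (xvec_minus i r s)) v)
    \<and> (\<forall>v. pr_rel (Suc r) (fa_mul (xvec_plus i r sp) (xvec_minus i r s)) v \<longrightarrow>
         (\<exists>c \<in> cspan {xvec_minus i r s' | s'. sorted s' \<and> length sp \<le> length s
                \<and> length s' = length s - length sp
                \<and> sum_list s' = sum_list s + sum_list sp}.
            fa_diff v c \<in> ideal (Suc r)))"
proof -
  interpret sl_current_root "Suc r" i r
    using assms(1,2) by unfold_locales auto
  let ?u = "fa_mul (xvec_plus i r sp) (xvec_minus i r s)"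
  let ?v = "bact_list (map xp sp) (fa_word (map xm s))"
  have "?u = fa_word (map xp sp @ map xm s)"
    by (simp add: xvec_plus_def xvec_minus_def)
  then have pr: "pr_rel (Suc r) ?u ?v"
    using pr_rel_bact_list[of "map xp sp" "map xm s"] bp_elt_xp map_xm_nm_words by auto
  obtain c where c: "c \<in> cspan {xvec_minus i r s' | s'. sorted s' \<and> length sp \<le> length s
      \<and> length s' = length s - length sp \<and> sum_list s' = sum_list s + sum_list sp}"
    "?v - c \<in> ideal (Suc r)"
    using bact_list_xp_xm_mod_ideal by blast
  show ?thesis
  proof (intro conjI exI allI impI)
    fix v assume "pr_rel (Suc r) ?u v"
    then have "(v - ?v) + (?v - c) \<in> ideal (Suc r)"
      by (intro fa.subspace_add[OF subspace_ideal] pr_rel_unique[OF _ pr] c(2))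
    then show "\<exists>c\<in>cspan {xvec_minus i r s' | s'. sorted s' \<and> length sp \<le> length s
        \<and> length s' = length s - length sp \<and> sum_list s' = sum_list s + sum_list sp}.
        fa_diff v c \<in> ideal (Suc r)"
      using c(1) by (auto simp: fa_diff_eq_minus)
  qed (rule pr)
qed

end
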